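(* Let $(A,X)$ be a $C^*$-operator system in $\mathcal B(H)$ and let $(\tilde A,\tilde X)$ be a unitization of $(A,X)$ in $\mathcal B(H)$. Then $\tilde A\subseteq M(A)$ and $\tilde X\subseteq M(X)$. Consequently, if $\pi:X\to\mathcal B(K)$ is a non-degenerate ccp representation of $(A,X)$ on a Hilbert space $K$, there is a unique ccp representation $\tilde\pi:\tilde X\to\mathcal B(K)$ of $(\tilde A,\tilde X)$ extending $\pi$.
   Context: A ccp map is completely contractive, $*$-preserving and completely positive. A $C^*$-operator system $(A,X)$ on $H$: norm-closed self-adjoint $A\subseteq X\subseteq\mathcal B(H)$, $A$ a $C^*$-subalgebra with $AH=H$, $X=\overline{\operatorname{span}}\,AX$; unital if $A$ is unital. A representation of $(A,X)$ on $K$ is a ccp map $\pi:X\to\mathcal B(K)$ with $\pi(ax)=\pi(a)\pi(x)$; non-degenerate if $\pi|_A$ is. $M(A)=\{m\in\mathcal B(H): mA\cup Am\subseteq A\}$, $M(X)=\{k\in\mathcal B(H):kA\cup Ak\subseteq X\}$. A unitization of $(A,X)$ is a unital $C^*$-operator system $(\tilde A,\tilde X)$ on $H$ containing $(A,X)$ such that $A$ is an ideal of $\tilde A$, $A\tilde X\subseteq X$, and $x\in\tilde X$ with $ax=0$ for all $a\in A$ implies $x=0$. *)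

theory Defs
  imports "HOL-Analysis.Analysis"
begin

text \<open>A complex Hilbert space: a real Banach space with a compatible complex scalar
multiplication and a complex inner product (linear in the second argument,
conjugate-linear in the first) inducing the norm.\<close>

class chilbert = banach +
  fixes cscale :: "complex \<Rightarrow> 'a \<Rightarrow> 'a"
  fixes cinner :: "'a \<Rightarrow> 'a \<Rightarrow> complex"
  assumes cscale_add_right: "cscale c (x + y) = cscale c x + cscale c y"
    and cscale_add_left: "cscale (c + d) x = cscale c x + cscale d x"
    and cscale_cscale: "cscale c (cscale d x) = cscale (c * d) x"
    and cscale_of_real: "cscale (complex_of_real r) x = scaleR r x"
    and cinner_add_right: "cinner x (y + z) = cinner x y + cinner x z"
    and cinner_cscale_right: "cinner x (cscale c y) = c * cinner x y"
    and cinner_commute: "cinner y x = cnj (cinner x y)"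
    and cinner_self: "cinner x x = complex_of_real ((norm x)\<^sup>2)"

instantiation complex :: chilbert
begin
definition cscale_complex :: "complex \<Rightarrow> complex \<Rightarrow> complex" where
  "cscale_complex c x = c * x"
definition cinner_complex :: "complex \<Rightarrow> complex \<Rightarrow> complex" where
  "cinner_complex x y = cnj x * y"
instance
proof
  fix x y z c d :: complex and r :: real
  show "cscale c (x + y) = cscale c x + cscale c y" by (simp add: cscale_complex_def algebra_simps)
  show "cscale (c + d) x = cscale c x + cscale d x" by (simp add: cscale_complex_def algebra_simps)
  show "cscale c (cscale d x) = cscale (c * d) x" by (simp add: cscale_complex_def algebra_simps)
  show "cscale (complex_of_real r) x = scaleR r x" by (simp add: cscale_complex_def scaleR_conv_of_real)
  show "cinner x (y + z) = cinner x y + cinner x z" by (simp add: cinner_complex_def algebra_simps)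
  show "cinner x (cscale c y) = c * cinner x y" by (simp add: cinner_complex_def cscale_complex_def algebra_simps)
  show "cinner y x = cnj (cinner x y)" by (simp add: cinner_complex_def mult.commute)
  show "cinner x x = complex_of_real ((norm x)\<^sup>2)"
    by (simp add: cinner_complex_def mult.commute complex_norm_square[symmetric])
qed
end

definition bop :: "('h::chilbert \<Rightarrow> 'h) \<Rightarrow> bool" where
  "bop T \<longleftrightarrow> (\<forall>x y. T (x + y) = T x + T y) \<and> (\<forall>c x. T (cscale c x) = cscale c (T x))
     \<and> (\<exists>B. \<forall>x. norm (T x) \<le> B * norm x)"

definition BH :: "('h::chilbert \<Rightarrow> 'h) set" where
  "BH = {T. bop T}"

definition is_adj :: "('h::chilbert \<Rightarrow> 'h) \<Rightarrow> ('h \<Rightarrow> 'h) \<Rightarrow> bool" where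
  "is_adj T S \<longleftrightarrow> (\<forall>x y. cinner (T x) y = cinner x (S y))"

definition adj :: "('h::chilbert \<Rightarrow> 'h) \<Rightarrow> ('h \<Rightarrow> 'h)" where
  "adj T = (THE S. is_adj T S)"

definition opnorm :: "('h::chilbert \<Rightarrow> 'h) \<Rightarrow> real" where
  "opnorm T = Sup ((\<lambda>x. norm (T x)) ` {x. norm x \<le> 1})"

definition zero_op :: "'h::chilbert \<Rightarrow> 'h" where
  "zero_op = (\<lambda>_. 0)"

definition op_subspace :: "('h::chilbert \<Rightarrow> 'h) set \<Rightarrow> bool" where
  "op_subspace S \<longleftrightarrow> zero_op \<in> S \<and> (\<forall>T\<in>S. \<forall>U\<in>S. (\<lambda>x. T x + U x) \<in> S)
     \<and> (\<forall>c. \<forall>T\<in>S. (\<lambda>x. cscale c (T x)) \<in> S)"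

definition selfadj_set :: "('h::chilbert \<Rightarrow> 'h) set \<Rightarrow> bool" where
  "selfadj_set S \<longleftrightarrow> (\<forall>T\<in>S. \<exists>U\<in>S. is_adj T U)"

definition op_closure :: "('h::chilbert \<Rightarrow> 'h) set \<Rightarrow> ('h \<Rightarrow> 'h) set" where
  "op_closure S = {T. bop T \<and> (\<exists>f. (\<forall>n. f n \<in> S) \<and>
      (\<lambda>n. opnorm (\<lambda>x. f n x - T x)) \<longlonglongrightarrow> 0)}"

definition op_closed :: "('h::chilbert \<Rightarrow> 'h) set \<Rightarrow> bool" where
  "op_closed S \<longleftrightarrow> op_closure S \<subseteq> S"

definition op_span :: "('h::chilbert \<Rightarrow> 'h) set \<Rightarrow> ('h \<Rightarrow> 'h) set" where
  "op_span S = {T. \<exists>(n::nat) c F. (\<forall>i<n. F i \<in> S) \<and> T = (\<lambda>x. \<Sum>i<n. cscale (c i) (F i x))}"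

definition hspan :: "'h::chilbert set \<Rightarrow> 'h set" where
  "hspan S = {y. \<exists>(n::nat) c v. (\<forall>i<n. v i \<in> S) \<and> y = (\<Sum>i<n. cscale (c i) (v i))}"

definition cstar_subalg :: "('h::chilbert \<Rightarrow> 'h) set \<Rightarrow> bool" where
  "cstar_subalg A \<longleftrightarrow> A \<subseteq> BH \<and> op_subspace A \<and> (\<forall>a\<in>A. \<forall>b\<in>A. a \<circ> b \<in> A)
     \<and> selfadj_set A \<and> op_closed A"

definition cstar_opsys :: "('h::chilbert \<Rightarrow> 'h) set \<Rightarrow> ('h \<Rightarrow> 'h) set \<Rightarrow> bool" where
  "cstar_opsys A X \<longleftrightarrow> cstar_subalg A \<and> A \<subseteq> X \<and> X \<subseteq> BH \<and> op_closed X \<and> selfadj_set X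
     \<and> closure (hspan {a \<xi> | a \<xi>. a \<in> A}) = UNIV
     \<and> X = op_closure (op_span {a \<circ> x | a x. a \<in> A \<and> x \<in> X})"

definition unital_alg :: "('h::chilbert \<Rightarrow> 'h) set \<Rightarrow> bool" where
  "unital_alg A \<longleftrightarrow> (\<exists>e\<in>A. \<forall>a\<in>A. e \<circ> a = a \<and> a \<circ> e = a)"

definition mat_app :: "nat \<Rightarrow> (nat \<Rightarrow> nat \<Rightarrow> ('h::chilbert \<Rightarrow> 'h)) \<Rightarrow> (nat \<Rightarrow> 'h) \<Rightarrow> nat \<Rightarrow> 'h" where
  "mat_app n M \<xi> i = (\<Sum>j<n. M i j (\<xi> j))"

definition vnorm2 :: "nat \<Rightarrow> (nat \<Rightarrow> 'h::chilbert) \<Rightarrow> real" where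
  "vnorm2 n \<xi> = (\<Sum>i<n. (norm (\<xi> i))\<^sup>2)"

definition matnorm :: "nat \<Rightarrow> (nat \<Rightarrow> nat \<Rightarrow> ('h::chilbert \<Rightarrow> 'h)) \<Rightarrow> real" where
  "matnorm n M = Sup {sqrt (vnorm2 n (mat_app n M \<xi>)) | \<xi>. vnorm2 n \<xi> \<le> 1}"

definition mat_pos :: "nat \<Rightarrow> (nat \<Rightarrow> nat \<Rightarrow> ('h::chilbert \<Rightarrow> 'h)) \<Rightarrow> bool" where
  "mat_pos n M \<longleftrightarrow> (\<forall>\<xi>. Im (\<Sum>i<n. cinner (\<xi> i) (mat_app n M \<xi> i)) = 0
                         \<and> 0 \<le> Re (\<Sum>i<n. cinner (\<xi> i) (mat_app n M \<xi> i)))"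

definition ccp :: "('h::chilbert \<Rightarrow> 'h) set \<Rightarrow> (('h \<Rightarrow> 'h) \<Rightarrow> ('k::chilbert \<Rightarrow> 'k)) \<Rightarrow> bool" where
  "ccp X \<pi> \<longleftrightarrow> (\<forall>x\<in>X. bop (\<pi> x))
     \<and> (\<forall>x\<in>X. \<forall>y\<in>X. \<pi> (\<lambda>\<xi>. x \<xi> + y \<xi>) = (\<lambda>\<eta>. \<pi> x \<eta> + \<pi> y \<eta>))
     \<and> (\<forall>c. \<forall>x\<in>X. \<pi> (\<lambda>\<xi>. cscale c (x \<xi>)) = (\<lambda>\<eta>. cscale c (\<pi> x \<eta>)))
     \<and> (\<forall>x\<in>X. \<pi> (adj x) = adj (\<pi> x))
     \<and> (\<forall>n M. (\<forall>i<n. \<forall>j<n. M i j \<in> X) \<longrightarrow> matnorm n (\<lambda>i j. \<pi> (M i j)) \<le> matnorm n M)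
     \<and> (\<forall>n M. (\<forall>i<n. \<forall>j<n. M i j \<in> X) \<longrightarrow> mat_pos n M \<longrightarrow> mat_pos n (\<lambda>i j. \<pi> (M i j)))"

definition opsys_rep :: "('h::chilbert \<Rightarrow> 'h) set \<Rightarrow> ('h \<Rightarrow> 'h) set \<Rightarrow> (('h \<Rightarrow> 'h) \<Rightarrow> ('k::chilbert \<Rightarrow> 'k)) \<Rightarrow> bool" where
  "opsys_rep A X \<pi> \<longleftrightarrow> ccp X \<pi> \<and> (\<forall>a\<in>A. \<forall>x\<in>X. \<pi> (a \<circ> x) = \<pi> a \<circ> \<pi> x)"

definition nondegenerate :: "('h::chilbert \<Rightarrow> 'h) set \<Rightarrow> (('h \<Rightarrow> 'h) \<Rightarrow> ('k::chilbert \<Rightarrow> 'k)) \<Rightarrow> bool" where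
  "nondegenerate A \<pi> \<longleftrightarrow> closure (hspan {\<pi> a \<eta> | a \<eta>. a \<in> A}) = UNIV"

definition mult_alg :: "('h::chilbert \<Rightarrow> 'h) set \<Rightarrow> ('h \<Rightarrow> 'h) set" where
  "mult_alg A = {m. bop m \<and> (\<forall>a\<in>A. m \<circ> a \<in> A \<and> a \<circ> m \<in> A)}"

definition mult_sys :: "('h::chilbert \<Rightarrow> 'h) set \<Rightarrow> ('h \<Rightarrow> 'h) set \<Rightarrow> ('h \<Rightarrow> 'h) set" where
  "mult_sys A X = {k. bop k \<and> (\<forall>a\<in>A. k \<circ> a \<in> X \<and> a \<circ> k \<in> X)}"

definition unitization :: "('h::chilbert \<Rightarrow> 'h) set \<Rightarrow> ('h \<Rightarrow> 'h) set \<Rightarrow> ('h \<Rightarrow> 'h) set \<Rightarrow> ('h \<Rightarrow> 'h) set \<Rightarrow> bool" where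
  "unitization A X At Xt \<longleftrightarrow> cstar_opsys At Xt \<and> unital_alg At \<and> A \<subseteq> At \<and> X \<subseteq> Xt
     \<and> (\<forall>a\<in>A. \<forall>b\<in>At. a \<circ> b \<in> A \<and> b \<circ> a \<in> A)
     \<and> (\<forall>a\<in>A. \<forall>x\<in>Xt. a \<circ> x \<in> X)
     \<and> (\<forall>x\<in>Xt. (\<forall>a\<in>A. a \<circ> x = zero_op) \<longrightarrow> x = zero_op)"

end

theory Submission
  imports Defs
begin

text \<open>The inclusions \<open>At \<subseteq> M(A)\<close> and \<open>Xt \<subseteq> M(X)\<close> follow from the ideal property of \<open>A\<close>
in \<open>At\<close> and from \<open>A Xt \<subseteq> X\<close> after taking adjoints. For the extension, \<open>\<pi>t x\<close> is defined on
the dense subspace of vectors \<open>\<Sum>k \<pi>(a\<^sub>k) \<eta>\<^sub>k\<close> by \<open>\<pi>t x (\<Sum>k \<pi>(a\<^sub>k) \<eta>\<^sub>k) = \<Sum>k \<pi>(x a\<^sub>k) \<eta>\<^sub>k\<close>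
and extended by continuity. The bound \<open>\<parallel>\<pi>t x\<parallel> \<le> \<parallel>x\<parallel>\<close>, which also makes \<open>\<pi>t x\<close> well defined,
comes from positivity of the operator matrix \<open>[[1, x], [x*, \<parallel>x\<parallel>\<^sup>2]]\<close> over \<open>Xt\<close>: compressing it
by elements of \<open>A\<close> yields a positive matrix over \<open>X\<close>, to which the complete positivity of \<open>\<pi>\<close>
applies. The same compression argument shows that \<open>\<pi>t\<close> is completely positive, and complete
contractivity follows since a matrix \<open>M\<close> has norm at most \<open>t\<close> exactly when
\<open>[[1, M], [M*, t\<^sup>2]]\<close> is positive. Multiplicativity and uniqueness are checked on the dense
subspace.\<close>

lemma cinner_add_left: "cinner (x + y) (z::'a::chilbert) = cinner x z + cinner y z"
  by (metis cinner_add_right cinner_commute complex_cnj_add)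

lemma cinner_cscale_left: "cinner (cscale c x) (y::'a::chilbert) = cnj c * cinner x y"
  by (metis cinner_commute cinner_cscale_right complex_cnj_mult)

lemma cinner_zero_right [simp]: "cinner (x::'a::chilbert) 0 = 0"
  using cinner_add_right[of x 0 0] by simp

lemma cinner_zero_left [simp]: "cinner 0 (x::'a::chilbert) = 0"
  using cinner_add_left[of 0 0 x] by simp

lemma cinner_minus_right: "cinner (x::'a::chilbert) (- y) = - cinner x y"
  using cinner_add_right[of x y "- y"] by (simp add: eq_neg_iff_add_eq_0 add.commute)

lemma cinner_minus_left: "cinner (- x) (y::'a::chilbert) = - cinner x y"
  using cinner_add_left[of x "- x" y] by (simp add: eq_neg_iff_add_eq_0 add.commute)

lemma cinner_diff_right: "cinner (x::'a::chilbert) (y - z) = cinner x y - cinner x z"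
  using cinner_add_right[of x y "- z"] by (simp add: cinner_minus_right)

lemma cinner_sum_right: "cinner (x::'a::chilbert) (\<Sum>i\<in>F. f i) = (\<Sum>i\<in>F. cinner x (f i))"
  by (induction F rule: infinite_finite_induct) (auto simp: cinner_add_right)

lemma cinner_sum_left: "cinner (\<Sum>i\<in>F. f i) (x::'a::chilbert) = (\<Sum>i\<in>F. cinner (f i) x)"
  by (induction F rule: infinite_finite_induct) (auto simp: cinner_add_left)

lemma cinner_scaleR_right: "cinner x (scaleR r y) = complex_of_real r * cinner x (y::'a::chilbert)"
  using cinner_cscale_right[of x "complex_of_real r" y] by (simp only: cscale_of_real)

lemma cinner_scaleR_left: "cinner (scaleR r x) y = complex_of_real r * cinner x (y::'a::chilbert)"
  using cinner_cscale_left[of "complex_of_real r" x y] by (simp add: cscale_of_real)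

lemma cinner_self_Re: "Re (cinner x x) = (norm (x::'a::chilbert))\<^sup>2"
  by (simp add: cinner_self)

lemma cinner_self_Im: "Im (cinner x (x::'a::chilbert)) = 0"
  by (simp add: cinner_self)

lemma cinner_self_eq_0_iff: "cinner x x = 0 \<longleftrightarrow> (x::'a::chilbert) = 0"
  by (simp add: cinner_self)

lemma cscale_zero_right [simp]: "cscale c (0::'a::chilbert) = 0"
  using cscale_add_right[of c 0 0] by simp

lemma cscale_sum_right: "cscale c (\<Sum>i\<in>F. f i) = (\<Sum>i\<in>F. cscale c (f i::'a::chilbert))"
  by (induction F rule: infinite_finite_induct) (auto simp: cscale_add_right)

lemma cscale_scaleR: "cscale c (scaleR r x) = scaleR r (cscale c (x::'a::chilbert))"
  by (metis cscale_cscale cscale_of_real mult.commute)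

lemma norm_cscale: "norm (cscale c (x::'a::chilbert)) = cmod c * norm x"
proof -
  have "cinner (cscale c x) (cscale c x) = cnj c * c * cinner x x"
    by (simp add: cinner_cscale_left cinner_cscale_right)
  then have "complex_of_real ((norm (cscale c x))\<^sup>2) = cnj c * c * complex_of_real ((norm x)\<^sup>2)"
    by (simp only: cinner_self)
  also have "cnj c * c = complex_of_real ((cmod c)\<^sup>2)"
    using complex_norm_square[of c] by (simp add: mult.commute)
  finally have "(norm (cscale c x))\<^sup>2 = (cmod c * norm x)\<^sup>2"
    by (metis of_real_eq_iff of_real_mult power_mult_distrib)
  then show ?thesis by (simp add: power2_eq_iff_nonneg)
qed

lemma power2_norm_add:
  "(norm (x + y))\<^sup>2 = (norm x)\<^sup>2 + (norm y)\<^sup>2 + 2 * Re (cinner x (y::'a::chilbert))"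
proof -
  have "cinner (x + y) (x + y) = cinner x x + cinner y y + (cinner x y + cnj (cinner x y))"
    by (simp add: cinner_add_left cinner_add_right cinner_commute[of y x])
  then have "Re (cinner (x + y) (x + y)) = Re (cinner x x) + Re (cinner y y) + 2 * Re (cinner x y)"
    by simp
  then show ?thesis by (simp add: cinner_self_Re)
qed

lemma parallelogram_law:
  "(norm (a + b))\<^sup>2 + (norm (a - b))\<^sup>2 = 2 * (norm a)\<^sup>2 + 2 * (norm (b::'a::chilbert))\<^sup>2"
  using power2_norm_add[of a b] power2_norm_add[of a "- b"] by (simp add: cinner_minus_right)

lemma norm_cinner_le: "cmod (cinner x y) \<le> norm x * norm (y::'a::chilbert)"
proof (cases "y = 0")
  case False
  define z where "z = cinner x y"
  define c where "c = (if z = 0 then 1 else - cnj z / complex_of_real (cmod z))"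
  have cz: "c * z = - complex_of_real (cmod z)"
    using complex_norm_square[of z] by (auto simp: c_def field_simps power2_eq_square mult.commute)
  define y' where "y' = cscale c y"
  have ny': "norm y' = norm y"
    by (simp add: y'_def norm_cscale c_def norm_divide)
  have xy': "cinner x y' = - complex_of_real (cmod z)"
    by (simp add: y'_def cinner_cscale_right z_def[symmetric] cz)
  have ny: "norm y > 0" using False by simp
  define t where "t = cmod z / (norm y)\<^sup>2"
  \<comment> \<open>expand \<open>0 \<le> \<parallel>x + t y'\<parallel>\<^sup>2\<close> at the minimising \<open>t\<close>\<close>
  have "0 \<le> (norm (x + scaleR t y'))\<^sup>2" by simp
  also have "\<dots> = (norm x)\<^sup>2 + t\<^sup>2 * (norm y)\<^sup>2 - 2 * t * cmod z"
    by (simp add: power2_norm_add cinner_scaleR_right xy' ny' power_mult_distrib)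
  also have "\<dots> = (norm x)\<^sup>2 - (cmod z)\<^sup>2 / (norm y)\<^sup>2"
    using ny by (simp add: t_def field_simps power2_eq_square)
  finally have "(cmod z)\<^sup>2 \<le> (norm x * norm y)\<^sup>2"
    using ny by (simp add: field_simps power_mult_distrib)
  then show ?thesis unfolding z_def by (rule power2_le_imp_le) simp
qed simp

lemma bounded_bilinear_cinner: "bounded_bilinear (cinner :: 'a::chilbert \<Rightarrow> 'a \<Rightarrow> complex)"
proof
  fix a a' b b' :: 'a and r :: real
  show "cinner (a + a') b = cinner a b + cinner a' b" by (rule cinner_add_left)
  show "cinner a (b + b') = cinner a b + cinner a b'" by (rule cinner_add_right)
  show "cinner (scaleR r a) b = scaleR r (cinner a b)"
    by (simp add: cinner_scaleR_left scaleR_conv_of_real)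
  show "cinner a (scaleR r b) = scaleR r (cinner a b)"
    by (simp add: cinner_scaleR_right scaleR_conv_of_real)
  show "\<exists>K. \<forall>a b. norm (cinner a b) \<le> norm a * norm (b::'a) * K"
    by (rule exI[of _ 1]) (simp add: norm_cinner_le)
qed

lemmas tendsto_cinner = bounded_bilinear.tendsto[OF bounded_bilinear_cinner]
lemmas continuous_cinner = bounded_bilinear.continuous[OF bounded_bilinear_cinner]

lemma bounded_linear_cscale: "bounded_linear (cscale c :: 'a::chilbert \<Rightarrow> 'a)"
proof
  fix x y :: 'a and r :: real
  show "cscale c (x + y) = cscale c x + cscale c y" by (rule cscale_add_right)
  show "cscale c (scaleR r x) = scaleR r (cscale c x)" by (rule cscale_scaleR)
  show "\<exists>K. \<forall>x. norm (cscale c (x::'a)) \<le> norm x * K"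
    by (rule exI[of _ "cmod c"]) (simp add: norm_cscale mult.commute)
qed

lemmas tendsto_cscale = bounded_linear.tendsto[OF bounded_linear_cscale]

lemma bop_iff_bounded_linear:
  "bop T \<longleftrightarrow> bounded_linear T \<and> (\<forall>c x. T (cscale c x) = cscale c (T x))"
proof
  assume T: "bop T"
  then obtain B where B: "\<forall>x. norm (T x) \<le> B * norm x" by (auto simp: bop_def)
  have "bounded_linear T"
  proof
    show "T (x + y) = T x + T y" for x y using T by (simp add: bop_def)
    show "T (scaleR r x) = scaleR r (T x)" for r x
      using T by (simp add: bop_def flip: cscale_of_real)
    show "\<exists>K. \<forall>x. norm (T x) \<le> norm x * K" using B by (metis mult.commute)
  qed
  then show "bounded_linear T \<and> (\<forall>c x. T (cscale c x) = cscale c (T x))"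
    using T by (simp add: bop_def)
next
  assume "bounded_linear T \<and> (\<forall>c x. T (cscale c x) = cscale c (T x))"
  then show "bop T"
    unfolding bop_def
    by (metis bounded_linear.pos_bounded linear_add bounded_linear.linear mult.commute)
qed

lemma bop_bounded_linear: "bop T \<Longrightarrow> bounded_linear T"
  by (simp add: bop_iff_bounded_linear)

lemma bopD_add: "bop T \<Longrightarrow> T (x + y) = T x + T y"
  by (simp add: bop_def)

lemma bopD_cscale: "bop T \<Longrightarrow> T (cscale c x) = cscale c (T x)"
  by (simp add: bop_def)

lemma bop_bound: "bop T \<Longrightarrow> \<exists>B\<ge>0. \<forall>x. norm (T x) \<le> B * norm x"
  by (metis bop_bounded_linear bounded_linear.nonneg_bounded mult.commute)

lemma bop_zero: "bop T \<Longrightarrow> T 0 = 0"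
  by (simp add: bop_bounded_linear linear_simps)

lemma bop_minus: "bop T \<Longrightarrow> T (- x) = - T x"
  by (simp add: bop_bounded_linear linear_simps)

lemma bop_diff: "bop T \<Longrightarrow> T (x - y) = T x - T y"
  by (simp add: bop_bounded_linear linear_simps)

lemma bop_scaleR: "bop T \<Longrightarrow> T (scaleR r x) = scaleR r (T x)"
  by (simp add: bop_bounded_linear linear_simps)

lemma bop_sum: "bop T \<Longrightarrow> T (\<Sum>i\<in>F. f i) = (\<Sum>i\<in>F. T (f i))"
  by (simp add: bop_bounded_linear linear_sum bounded_linear.linear)

lemma bop_tendsto: "bop T \<Longrightarrow> (f \<longlongrightarrow> l) F \<Longrightarrow> ((\<lambda>n. T (f n)) \<longlongrightarrow> T l) F"
  by (rule bounded_linear.tendsto[OF bop_bounded_linear])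

lemma isCont_bop: "bop T \<Longrightarrow> isCont T x"
  by (rule linear_continuous_at[OF bop_bounded_linear])

lemma bop_id: "bop (\<lambda>x. x)"
  by (simp add: bop_iff_bounded_linear bounded_linear_ident)

lemma bop_comp: "bop S \<Longrightarrow> bop T \<Longrightarrow> bop (S \<circ> T)"
  by (simp add: bop_iff_bounded_linear bounded_linear_compose comp_def)

lemma bop_add: "bop S \<Longrightarrow> bop T \<Longrightarrow> bop (\<lambda>x. S x + T x)"
  by (simp add: bop_iff_bounded_linear bounded_linear_add cscale_add_right)

lemma bop_diff_op: "bop S \<Longrightarrow> bop T \<Longrightarrow> bop (\<lambda>x. S x - T x)"
  by (simp add: bop_iff_bounded_linear bounded_linear_sub
      linear_diff[OF bounded_linear.linear[OF bounded_linear_cscale]])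

lemma bop_cscale: "bop T \<Longrightarrow> bop (\<lambda>x. cscale c (T x))"
  by (simp add: bop_iff_bounded_linear bounded_linear_compose[OF bounded_linear_cscale]
      cscale_cscale mult.commute)

lemma bop_sum_op: "(\<And>i. i \<in> F \<Longrightarrow> bop (f i)) \<Longrightarrow> bop (\<lambda>x. \<Sum>i\<in>F. f i x)"
  by (simp add: bop_iff_bounded_linear bounded_linear_sum cscale_sum_right)

lemma opnorm_bdd: "bop T \<Longrightarrow> bdd_above ((\<lambda>x. norm (T x)) ` {x. norm x \<le> 1})"
proof -
  assume "bop T"
  then obtain B where B: "B \<ge> 0" "\<And>x. norm (T x) \<le> B * norm x" using bop_bound by blast
  have "norm (T x) \<le> B" if "norm x \<le> 1" for x
    using B(2)[of x] mult_left_le[OF that B(1)] by linarith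
  then show ?thesis by (intro bdd_aboveI[of _ B]) auto
qed

lemma opnorm_upper: "bop T \<Longrightarrow> norm x \<le> 1 \<Longrightarrow> norm (T x) \<le> opnorm T"
  unfolding opnorm_def by (rule cSup_upper) (auto intro: opnorm_bdd)

lemma opnorm_nonneg: "bop T \<Longrightarrow> 0 \<le> opnorm T"
  using opnorm_upper[of T 0] by (simp add: bop_zero)

lemma opnorm_le: "bop T \<Longrightarrow> norm (T x) \<le> opnorm T * norm x"
proof (cases "x = 0")
  case False
  assume T: "bop T"
  have "norm (T (scaleR (1 / norm x) x)) \<le> opnorm T"
    using False by (intro opnorm_upper[OF T]) simp
  then show ?thesis
    using False by (simp add: bop_scaleR[OF T] field_simps)
qed (simp add: bop_zero)

lemma opnorm_least:
  assumes "B \<ge> 0" and "\<And>x. norm (T x) \<le> B * norm x"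
  shows "opnorm T \<le> B"
  unfolding opnorm_def
proof (rule cSup_least)
  show "(\<lambda>x. norm (T x)) ` {x. norm x \<le> 1} \<noteq> {}"
    by (metis (mono_tags) empty_iff image_eqI mem_Collect_eq norm_zero zero_le_one)
  fix r assume "r \<in> (\<lambda>x. norm (T x)) ` {x. norm x \<le> 1}"
  then obtain x where "norm x \<le> 1" "r = norm (T x)" by auto
  then show "r \<le> B" using assms(2)[of x] mult_left_le[of "norm x" B] assms(1) by linarith
qed

lemma opnorm_add_le:
  assumes "bop S" "bop T"
  shows "opnorm (\<lambda>x. S x + T x) \<le> opnorm S + opnorm T"
proof (rule opnorm_least)
  show "0 \<le> opnorm S + opnorm T" using assms by (simp add: opnorm_nonneg)
  show "norm (S x + T x) \<le> (opnorm S + opnorm T) * norm x" for x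
    using norm_triangle_ineq[of "S x" "T x"] opnorm_le[OF assms(1), of x] opnorm_le[OF assms(2), of x]
    by (simp add: distrib_right)
qed

lemma opnorm_comp_le:
  assumes "bop T" "B \<ge> 0" "\<And>x. norm (L x) \<le> B * norm x"
  shows "opnorm (\<lambda>x. L (T x)) \<le> B * opnorm T"
proof (rule opnorm_least)
  show "0 \<le> B * opnorm T" using assms by (simp add: opnorm_nonneg)
  show "norm (L (T x)) \<le> B * opnorm T * norm x" for x
    using assms(3)[of "T x"] mult_left_mono[OF opnorm_le[OF assms(1), of x] assms(2)]
    by (simp add: mult.assoc)
qed

lemma sum_lessThan_add: "(\<Sum>i<(n::nat) + m. g i) = (\<Sum>i<n. g i) + (\<Sum>i<m. g (n + i))"
  by (induction m) (simp_all add: add.assoc)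

lemma op_spanI:
  assumes "\<And>i. i < (n::nat) \<Longrightarrow> F i \<in> S"
  shows "(\<lambda>x. \<Sum>i<n. cscale (c i) (F i x)) \<in> op_span S"
  unfolding op_span_def using assms by blast

lemma op_span_bop: "S \<subseteq> BH \<Longrightarrow> T \<in> op_span S \<Longrightarrow> bop T"
  unfolding op_span_def BH_def by (auto intro!: bop_sum_op bop_cscale)

lemma op_span_zero: "zero_op \<in> op_span S"
  unfolding op_span_def zero_op_def by (rule CollectI, rule exI[of _ 0]) simp

lemma op_span_add:
  assumes "T \<in> op_span S" "U \<in> op_span S"
  shows "(\<lambda>x. T x + U x) \<in> op_span S"
proof -
  obtain n :: nat and c F where T: "\<forall>i<n. F i \<in> S" "T = (\<lambda>x. \<Sum>i<n. cscale (c i) (F i x))"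
    using assms(1) unfolding op_span_def by blast
  obtain m :: nat and d G where U: "\<forall>i<m. G i \<in> S" "U = (\<lambda>x. \<Sum>i<m. cscale (d i) (G i x))"
    using assms(2) unfolding op_span_def by blast
  define c' where "c' i = (if i < n then c i else d (i - n))" for i
  define F' where "F' i = (if i < n then F i else G (i - n))" for i
  have "(\<lambda>x. T x + U x) = (\<lambda>x. \<Sum>i<n+m. cscale (c' i) (F' i x))"
    unfolding sum_lessThan_add T(2) U(2) c'_def F'_def by auto
  moreover have "(\<lambda>x. \<Sum>i<n+m. cscale (c' i) (F' i x)) \<in> op_span S"
    by (rule op_spanI) (use T U in \<open>auto simp: F'_def\<close>)
  ultimately show ?thesis by simp
qed

lemma op_span_comp_left:
  assumes "bop L" "\<And>T. T \<in> S \<Longrightarrow> (\<lambda>x. L (T x)) \<in> S" "T \<in> op_span S"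
  shows "(\<lambda>x. L (T x)) \<in> op_span S"
proof -
  obtain n :: nat and c F where T: "\<forall>i<n. F i \<in> S" "T = (\<lambda>x. \<Sum>i<n. cscale (c i) (F i x))"
    using assms(3) unfolding op_span_def by blast
  have "(\<lambda>x. \<Sum>i<n. cscale (c i) ((\<lambda>x. L (F i x)) x)) \<in> op_span S"
    by (rule op_spanI) (use T(1) assms(2) in auto)
  then show ?thesis
    unfolding T(2) using assms(1) by (simp add: bop_sum bopD_cscale)
qed

lemma op_span_cscale:
  assumes "T \<in> op_span S"
  shows "(\<lambda>x. cscale a (T x)) \<in> op_span S"
proof -
  obtain n :: nat and c F where T: "\<forall>i<n. F i \<in> S" "T = (\<lambda>x. \<Sum>i<n. cscale (c i) (F i x))"
    using assms unfolding op_span_def by blast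
  have "(\<lambda>x. \<Sum>i<n. cscale (a * c i) (F i x)) \<in> op_span S"
    by (rule op_spanI) (use T in auto)
  then show ?thesis unfolding T(2) by (simp add: cscale_sum_right cscale_cscale)
qed

lemma op_closureI:
  assumes S: "S \<subseteq> BH" and T: "bop T" and f: "\<And>n. f n \<in> S"
    and le: "\<And>n. opnorm (\<lambda>x. f n x - T x) \<le> e n" and e: "e \<longlonglongrightarrow> 0"
  shows "T \<in> op_closure S"
proof -
  have "bop (\<lambda>x. f n x - T x)" for n
    using f S T by (auto simp: BH_def intro: bop_diff_op)
  then have "(\<lambda>n. opnorm (\<lambda>x. f n x - T x)) \<longlonglongrightarrow> 0"
    by (intro tendsto_sandwich[OF _ _ tendsto_const e] always_eventually allI opnorm_nonneg le)
  then show ?thesis unfolding op_closure_def using T f by blast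
qed

lemma op_closureE:
  assumes "T \<in> op_closure S"
  obtains f where "\<And>n. f n \<in> S" "(\<lambda>n. opnorm (\<lambda>x. f n x - T x)) \<longlonglongrightarrow> 0"
  using assms that unfolding op_closure_def by blast

lemma op_closure_bop: "T \<in> op_closure S \<Longrightarrow> bop T"
  unfolding op_closure_def by blast

lemma op_closure_subset: "S \<subseteq> BH \<Longrightarrow> T \<in> S \<Longrightarrow> T \<in> op_closure S"
  by (rule op_closureI[where f = "\<lambda>n. T" and e = "\<lambda>n. 0"])
    (auto simp: BH_def intro: opnorm_least)

lemma op_closure_add:
  assumes S: "S \<subseteq> BH" "\<And>T U. T \<in> S \<Longrightarrow> U \<in> S \<Longrightarrow> (\<lambda>x. T x + U x) \<in> S"
    and T: "T \<in> op_closure S" and U: "U \<in> op_closure S"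
  shows "(\<lambda>x. T x + U x) \<in> op_closure S"
proof -
  obtain f where f: "\<And>n. f n \<in> S" "(\<lambda>n. opnorm (\<lambda>x. f n x - T x)) \<longlonglongrightarrow> 0"
    using op_closureE[OF T] by blast
  obtain g where g: "\<And>n. g n \<in> S" "(\<lambda>n. opnorm (\<lambda>x. g n x - U x)) \<longlonglongrightarrow> 0"
    using op_closureE[OF U] by blast
  have bT: "bop T" and bU: "bop U" using T U op_closure_bop by blast+
  have "bop (f n)" "bop (g n)" for n using f g S by (auto simp: BH_def)
  then have "opnorm (\<lambda>x. (f n x + g n x) - (T x + U x))
      \<le> opnorm (\<lambda>x. f n x - T x) + opnorm (\<lambda>x. g n x - U x)" for n
    using opnorm_add_le[OF bop_diff_op bop_diff_op, of "f n" T "g n" U] bT bU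
    by (simp add: algebra_simps)
  then show ?thesis
    using tendsto_add[OF f(2) g(2)] f(1) g(1) S bT bU
    by (intro op_closureI[where f = "\<lambda>n x. f n x + g n x"] bop_add) auto
qed

lemma op_closure_comp_left:
  assumes S: "S \<subseteq> BH" "\<And>T. T \<in> S \<Longrightarrow> (\<lambda>x. L (T x)) \<in> S"
    and L: "bop L" and T: "T \<in> op_closure S"
  shows "(\<lambda>x. L (T x)) \<in> op_closure S"
proof -
  obtain f where f: "\<And>n. f n \<in> S" "(\<lambda>n. opnorm (\<lambda>x. f n x - T x)) \<longlonglongrightarrow> 0"
    using op_closureE[OF T] by blast
  obtain B where B: "B \<ge> 0" "\<And>x. norm (L x) \<le> B * norm x" using bop_bound[OF L] by blast
  have bT: "bop T" using T op_closure_bop by blast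
  have "bop (f n)" for n using f S by (auto simp: BH_def)
  then have "opnorm (\<lambda>x. L (f n x) - L (T x)) \<le> B * opnorm (\<lambda>x. f n x - T x)" for n
    using opnorm_comp_le[OF bop_diff_op B, of "f n" T] bT by (simp add: bop_diff[OF L])
  then show ?thesis
    using tendsto_mult_right_zero[OF f(2), of B] f(1) S L bT bop_comp[OF L bT]
    by (intro op_closureI[where f = "\<lambda>n x. L (f n x)"]) (auto simp: comp_def)
qed

lemma op_closure_span_subspace:
  assumes "S \<subseteq> BH"
  shows "op_subspace (op_closure (op_span S))"
proof -
  have sb: "op_span S \<subseteq> BH" using op_span_bop[OF assms] by (auto simp: BH_def)
  show ?thesis
    unfolding op_subspace_def
    using op_closure_subset[OF sb op_span_zero] op_closure_add[OF sb op_span_add]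
      op_closure_comp_left[OF sb op_span_cscale bop_cscale[OF bop_id]]
    by blast
qed

section \<open>The Riesz representation theorem and adjoints\<close>

lemma almost_minimal_sequence_Cauchy:
  fixes s :: "nat \<Rightarrow> 'a::chilbert"
  assumes d: "0 \<le> d" and mid: "\<And>m n. 2 * d \<le> norm (s m + s n)"
    and s: "\<And>n. norm (s n) \<le> d + 1 / (real n + 1)"
  shows "Cauchy s"
proof (rule metric_CauchyI)
  have sq: "(norm (s k))\<^sup>2 \<le> d\<^sup>2 + (2 * d + 1) / (real M + 1)" if "k \<ge> M" for k M
  proof -
    have e: "1 / (real k + 1) \<le> 1 / (real M + 1)" using that by (simp add: frac_le)
    have "(norm (s k))\<^sup>2 \<le> (d + 1 / (real k + 1))\<^sup>2" using s[of k] by (simp add: power_mono)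
    also have "\<dots> = d\<^sup>2 + (2 * d + 1 / (real k + 1)) * (1 / (real k + 1))"
      by (simp add: power2_eq_square algebra_simps)
    also have "\<dots> \<le> d\<^sup>2 + (2 * d + 1) * (1 / (real M + 1))"
      using e d by (intro add_left_mono mult_mono) auto
    finally show ?thesis by simp
  qed
  fix e :: real assume e: "e > 0"
  obtain M :: nat where "4 * (2 * d + 1) / e\<^sup>2 < real M + 1"
    using reals_Archimedean2[of "4 * (2 * d + 1) / e\<^sup>2"] by (smt (verit) of_nat_0_le_iff)
  then have M: "4 * (2 * d + 1) / (real M + 1) < e\<^sup>2"
    using e by (simp add: field_simps)
  have "dist (s m) (s n) < e" if "m \<ge> M" "n \<ge> M" for m n
  proof -
    have "(2 * d)\<^sup>2 \<le> (norm (s m + s n))\<^sup>2" using mid[of m n] d by (intro power_mono) auto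
    then have "4 * d\<^sup>2 \<le> (norm (s m + s n))\<^sup>2" by (simp add: power_mult_distrib)
    then have "(norm (s m - s n))\<^sup>2 \<le> 4 * ((2 * d + 1) / (real M + 1))"
      using parallelogram_law[of "s m" "s n"] sq[OF that(1)] sq[OF that(2)] by linarith
    then have "(norm (s m - s n))\<^sup>2 < e\<^sup>2" using M by simp
    then show ?thesis using e by (simp add: dist_norm power_less_imp_less_base)
  qed
  then show "\<exists>M. \<forall>m\<ge>M. \<forall>n\<ge>M. dist (s m) (s n) < e" by blast
qed

lemma level_set_has_min_norm:
  fixes f :: "'a::chilbert \<Rightarrow> complex"
  assumes f: "bounded_linear f" and x1: "f x1 = 1"
  obtains x0 where "f x0 = 1" "\<And>y. f y = 1 \<Longrightarrow> norm x0 \<le> norm y"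
proof -
  define E where "E = {x. f x = 1}"
  define d where "d = Inf (norm ` E)"
  have Ene: "E \<noteq> {}" using x1 by (auto simp: E_def)
  have bb: "bdd_below (norm ` E)" by (auto intro: bdd_belowI[of _ 0])
  have dle: "d \<le> norm y" if "y \<in> E" for y
    unfolding d_def using bb that by (auto intro: cInf_lower)
  have d0: "0 \<le> d" unfolding d_def using Ene by (auto intro: cInf_greatest)
  have "\<exists>x\<in>E. norm x < d + 1 / (real n + 1)" for n
  proof -
    have "Inf (norm ` E) < d + 1 / (real n + 1)" unfolding d_def by simp
    then show ?thesis using Ene by (auto simp: cInf_less_iff[OF _ bb])
  qed
  then obtain s where s: "\<And>n. s n \<in> E" "\<And>n. norm (s n) < d + 1 / (real n + 1)" by metis
  have "d \<le> norm (scaleR (1/2) (s m + s n))" for m n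
    using s(1)[of m] s(1)[of n] by (intro dle) (simp add: E_def linear_simps f scaleR_conv_of_real)
  then have "2 * d \<le> norm (s m + s n)" for m n by (simp add: mult.commute)
  then have "Cauchy s"
    by (rule almost_minimal_sequence_Cauchy[OF d0]) (use s(2) in \<open>simp add: less_imp_le\<close>)
  then obtain x0 where x0: "s \<longlonglongrightarrow> x0" using Cauchy_convergent_iff convergent_def by blast
  have "(\<lambda>n. f (s n)) \<longlonglongrightarrow> f x0" by (rule bounded_linear.tendsto[OF f x0])
  moreover have "(\<lambda>n. f (s n)) = (\<lambda>n. 1)" using s(1) by (auto simp: E_def)
  ultimately have "f x0 = 1" using LIMSEQ_unique by (metis tendsto_const)
  moreover have "norm x0 \<le> d"
  proof (rule LIMSEQ_le[OF tendsto_norm[OF x0]])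
    have "(\<lambda>n. 1 / (real n + 1)) \<longlonglongrightarrow> 0"
      using LIMSEQ_inverse_real_of_nat by (simp add: inverse_eq_divide add.commute)
    then show "(\<lambda>n. d + 1 / (real n + 1)) \<longlonglongrightarrow> d"
      using tendsto_add[OF tendsto_const[of d]] by fastforce
    show "\<exists>N. \<forall>n\<ge>N. norm (s n) \<le> d + 1 / (real n + 1)" using s(2) less_imp_le by blast
  qed
  ultimately show ?thesis using that dle by (force simp: E_def)
qed

lemma min_norm_orthogonal_kernel:
  fixes f :: "'a::chilbert \<Rightarrow> complex"
  assumes add: "\<And>x y. f (x + y) = f x + f y" and sc: "\<And>c x. f (cscale c x) = c * f x"
    and x0: "f x0 = 1" and min: "\<And>y. f y = 1 \<Longrightarrow> norm x0 \<le> norm y"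
    and n0: "f n0 = 0"
  shows "cinner x0 n0 = 0"
proof -
  define w where "w = cinner x0 n0"
  define t :: real where "t = 1 / ((norm n0)\<^sup>2 + 1)"
  have p: "0 < (norm n0)\<^sup>2 + 1" by (simp add: add_nonneg_pos)
  have t0: "t > 0" and tn: "t * (norm n0)\<^sup>2 < 1"
    using p by (simp_all add: t_def field_simps)
  \<comment> \<open>perturb \<open>x0\<close> inside the level set along \<open>n0\<close>, in the direction decreasing the norm\<close>
  define l where "l = - complex_of_real t * cnj w"
  have "f (x0 + cscale l n0) = 1" using x0 n0 by (simp add: add sc)
  then have "(norm x0)\<^sup>2 \<le> (norm (x0 + cscale l n0))\<^sup>2" using min by (simp add: power_mono)
  also have "\<dots> = (norm x0)\<^sup>2 + (norm (cscale l n0))\<^sup>2 + 2 * Re (l * w)"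
    by (simp add: power2_norm_add cinner_cscale_right w_def)
  also have "Re (l * w) = - t * (cmod w)\<^sup>2"
    using cmod_power2[of w] by (simp add: l_def power2_eq_square algebra_simps)
  also have "(norm (cscale l n0))\<^sup>2 = t\<^sup>2 * (cmod w)\<^sup>2 * (norm n0)\<^sup>2"
    using t0 by (simp add: norm_cscale l_def norm_mult power_mult_distrib)
  finally have "0 \<le> (t * (cmod w)\<^sup>2) * (t * (norm n0)\<^sup>2 - 2)"
    by (simp add: power2_eq_square algebra_simps)
  moreover have "t * (norm n0)\<^sup>2 - 2 < 0" using tn by simp
  ultimately have "t * (cmod w)\<^sup>2 \<le> 0" by (auto simp: zero_le_mult_iff)
  then have "cmod w = 0" using t0 by (simp add: mult_le_0_iff)
  then show ?thesis by (simp add: w_def)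
qed

lemma riesz_representation:
  fixes f :: "'a::chilbert \<Rightarrow> complex"
  assumes add: "\<And>x y. f (x + y) = f x + f y" and sc: "\<And>c x. f (cscale c x) = c * f x"
    and bnd: "\<And>x. cmod (f x) \<le> B * norm x"
  shows "\<exists>z. \<forall>x. f x = cinner z x"
proof (cases "\<forall>x. f x = 0")
  case False
  have f: "bounded_linear f"
  proof
    show "f (x + y) = f x + f y" for x y by (rule add)
    show "f (scaleR r x) = scaleR r (f x)" for r x
      using sc[of "complex_of_real r" x] by (simp add: cscale_of_real scaleR_conv_of_real)
    show "\<exists>K. \<forall>x. norm (f x) \<le> norm x * K" using bnd by (metis mult.commute)
  qed
  from False obtain x1 where "f x1 \<noteq> 0" by blast
  then have "f (cscale (1 / f x1) x1) = 1" by (simp add: sc)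
  then obtain x0 where x0: "f x0 = 1" and min: "\<And>y. f y = 1 \<Longrightarrow> norm x0 \<le> norm y"
    using level_set_has_min_norm[OF f] by blast
  have nz: "(norm x0)\<^sup>2 > 0" using x0 linear_0[OF bounded_linear.linear[OF f]] by auto
  show ?thesis
  proof (intro exI allI)
    fix x
    have "f (x - cscale (f x) x0) = 0"
      using add[of "x - cscale (f x) x0" "cscale (f x) x0"] by (simp add: sc x0)
    then have "cinner x0 (x - cscale (f x) x0) = 0"
      using min_norm_orthogonal_kernel[OF add sc x0 min] by blast
    then have "cinner x0 x = f x * complex_of_real ((norm x0)\<^sup>2)"
      by (simp add: cinner_diff_right cinner_cscale_right cinner_self)
    then show "f x = cinner (scaleR (1 / (norm x0)\<^sup>2) x0) x"
      using nz by (simp add: cinner_scaleR_left field_simps)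
  qed
qed (intro exI[of _ 0]; simp)

lemma is_adj_unique: "is_adj T S1 \<Longrightarrow> is_adj T S2 \<Longrightarrow> S1 = S2"
proof
  fix y
  assume "is_adj T S1" "is_adj T S2"
  then have "cinner x (S1 y - S2 y) = 0" for x
    unfolding is_adj_def by (simp add: cinner_diff_right)
  then have "cinner (S1 y - S2 y) (S1 y - S2 y) = 0" by blast
  then show "S1 y = S2 y" by (simp add: cinner_self_eq_0_iff)
qed

lemma adj_eq: "is_adj T S \<Longrightarrow> adj T = S"
  unfolding adj_def using is_adj_unique by blast

lemma is_adj_sym: "is_adj T S \<Longrightarrow> is_adj S T"
  unfolding is_adj_def by (metis cinner_commute)

lemma is_adj_adj: "is_adj T S \<Longrightarrow> is_adj T (adj T)"
  using adj_eq by metis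

lemma is_adj_comp: "is_adj T T' \<Longrightarrow> is_adj S S' \<Longrightarrow> is_adj (T \<circ> S) (S' \<circ> T')"
  unfolding is_adj_def by simp

lemma adj_adj: "is_adj T (adj T) \<Longrightarrow> adj (adj T) = T"
  using adj_eq is_adj_sym by metis

lemma adj_comp: "is_adj T (adj T) \<Longrightarrow> is_adj S (adj S) \<Longrightarrow> adj (T \<circ> S) = adj S \<circ> adj T"
  by (rule adj_eq[OF is_adj_comp])

lemma selfadj_setD: "selfadj_set X \<Longrightarrow> T \<in> X \<Longrightarrow> is_adj T (adj T) \<and> adj T \<in> X"
  unfolding selfadj_set_def using adj_eq by metis

lemma bop_is_adj:
  fixes T :: "'a::chilbert \<Rightarrow> 'a"
  assumes "bop T"
  shows "is_adj T (adj T)"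
proof -
  obtain B where B: "B \<ge> 0" "\<And>x. norm (T x) \<le> B * norm x" using bop_bound[OF assms] by blast
  have "\<exists>z. \<forall>x. cinner y (T x) = cinner z x" for y
  proof (rule riesz_representation)
    show "cinner y (T (x + x')) = cinner y (T x) + cinner y (T x')" for x x'
      using assms by (simp add: bopD_add cinner_add_right)
    show "cinner y (T (cscale c x)) = c * cinner y (T x)" for c x
      using assms by (simp add: bopD_cscale cinner_cscale_right)
    show "cmod (cinner y (T x)) \<le> (norm y * B) * norm x" for x
      using norm_cinner_le[of y "T x"] mult_left_mono[OF B(2)[of x], of "norm y"]
      by (simp add: mult.assoc)
  qed
  then obtain S where "\<And>y x. cinner y (T x) = cinner (S y) x" by metis
  then have "is_adj T S" unfolding is_adj_def by (metis cinner_commute)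
  then show ?thesis using adj_eq by metis
qed

lemma additive_zero_on_dense_hspan:
  fixes f :: "'a::chilbert \<Rightarrow> 'b::real_normed_vector"
  assumes dense: "closure (hspan S) = UNIV"
    and add: "\<And>x y. f (x + y) = f x + f y" and cont: "\<And>x. isCont f x"
    and S: "\<And>v c. v \<in> S \<Longrightarrow> f (cscale c v) = 0"
  shows "f y = 0"
proof -
  have f0: "f 0 = 0" using add[of 0 0] by simp
  have f_sum: "f (\<Sum>i\<in>F. g i) = (\<Sum>i\<in>F. f (g i))" for F and g :: "nat \<Rightarrow> 'a"
    by (induction F rule: infinite_finite_induct) (simp_all add: add f0)
  have span: "f v = 0" if "v \<in> hspan S" for v
    using that unfolding hspan_def by (auto simp: f_sum S)
  obtain s where s: "\<And>n. s n \<in> hspan S" "s \<longlonglongrightarrow> y"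
    using dense closure_sequential by blast
  have "(\<lambda>n. f (s n)) \<longlonglongrightarrow> f y" by (rule isCont_tendsto_compose[OF cont s(2)])
  then have "(\<lambda>n. 0) \<longlonglongrightarrow> f y" using span[OF s(1)] by simp
  then show ?thesis by (simp add: LIMSEQ_const_iff)
qed

lemma bop_eq_on_dense_hspan:
  assumes dense: "closure (hspan S) = UNIV" and F: "bop F" and G: "bop G"
    and eq: "\<And>v. v \<in> S \<Longrightarrow> F v = G v"
  shows "F = G"
proof
  fix u
  have "F u - G u = 0"
  proof (rule additive_zero_on_dense_hspan[OF dense, where f = "\<lambda>u. F u - G u"])
    show "F (x + y) - G (x + y) = (F x - G x) + (F y - G y)" for x y
      using F G by (simp add: bopD_add)
    show "isCont (\<lambda>u. F u - G u) x" for x by (rule isCont_bop[OF bop_diff_op[OF F G]])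
    show "F (cscale c v) - G (cscale c v) = 0" if "v \<in> S" for v c
      using F G eq[OF that] by (simp add: bopD_cscale)
  qed
  then show "F u = G u" by simp
qed

lemma orthogonal_dense_hspan_zero:
  assumes dense: "closure (hspan S) = UNIV" and orth: "\<And>v. v \<in> S \<Longrightarrow> cinner v d = 0"
  shows "d = 0"
proof -
  have "cinner d d = 0"
  proof (rule additive_zero_on_dense_hspan[OF dense, where f = "\<lambda>v. cinner v d"])
    show "cinner (x + y) d = cinner x d + cinner y d" for x y by (rule cinner_add_left)
    show "isCont (\<lambda>v. cinner v d) x" for x
      by (intro continuous_cinner continuous_ident continuous_const)
    show "cinner (cscale c v) d = 0" if "v \<in> S" for v c
      using orth[OF that] by (simp add: cinner_cscale_left)
  qed
  then show ?thesis by (simp add: cinner_self_eq_0_iff)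
qed

lemma is_adj_on_dense_hspan:
  assumes dense: "closure (hspan S) = UNIV" and T: "bop T" and T': "bop T'"
    and eq: "\<And>u v. u \<in> S \<Longrightarrow> v \<in> S \<Longrightarrow> cinner (T u) v = cinner u (T' v)"
  shows "is_adj T T'"
proof -
  have left: "cinner (T u) v = cinner u (T' v)" if v: "v \<in> S" for u v
  proof -
    have "cinner (T u) v - cinner u (T' v) = 0"
    proof (rule additive_zero_on_dense_hspan[OF dense, where f = "\<lambda>u. cinner (T u) v - cinner u (T' v)"])
      show "cinner (T (x + y)) v - cinner (x + y) (T' v)
          = (cinner (T x) v - cinner x (T' v)) + (cinner (T y) v - cinner y (T' v))" for x y
        using T by (simp add: bopD_add cinner_add_left)
      show "isCont (\<lambda>u. cinner (T u) v - cinner u (T' v)) x" for x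
        by (intro continuous_diff continuous_cinner continuous_const continuous_ident isCont_bop T)
      show "cinner (T (cscale c u)) v - cinner (cscale c u) (T' v) = 0" if "u \<in> S" for u c
        using T eq[OF that v] by (simp add: bopD_cscale cinner_cscale_left)
    qed
    then show ?thesis by simp
  qed
  have "cinner (T u) v = cinner u (T' v)" for u v
  proof -
    have "cinner (T u) v - cinner u (T' v) = 0"
    proof (rule additive_zero_on_dense_hspan[OF dense, where f = "\<lambda>v. cinner (T u) v - cinner u (T' v)"])
      show "cinner (T u) (x + y) - cinner u (T' (x + y))
          = (cinner (T u) x - cinner u (T' x)) + (cinner (T u) y - cinner u (T' y))" for x y
        using T' by (simp add: bopD_add cinner_add_right)
      show "isCont (\<lambda>v. cinner (T u) v - cinner u (T' v)) x" for x
        by (intro continuous_diff continuous_cinner continuous_const continuous_ident isCont_bop T')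
      show "cinner (T u) (cscale c v) - cinner u (T' (cscale c v)) = 0" if "v \<in> S" for v c
        using T' left[OF that] by (simp add: bopD_cscale cinner_cscale_right)
    qed
    then show ?thesis by simp
  qed
  then show ?thesis unfolding is_adj_def by blast
qed

lemma op_subspace_zero: "op_subspace S \<Longrightarrow> zero_op \<in> S"
  unfolding op_subspace_def by blast

lemma op_subspace_add: "op_subspace S \<Longrightarrow> T \<in> S \<Longrightarrow> U \<in> S \<Longrightarrow> (\<lambda>x. T x + U x) \<in> S"
  unfolding op_subspace_def by blast

lemma op_subspace_cscale: "op_subspace S \<Longrightarrow> T \<in> S \<Longrightarrow> (\<lambda>x. cscale c (T x)) \<in> S"
  unfolding op_subspace_def by blast

lemma op_subspace_sum:
  assumes S: "op_subspace S" and "finite F" and "\<And>i. i \<in> F \<Longrightarrow> f i \<in> S"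
  shows "(\<lambda>x. \<Sum>i\<in>F. f i x) \<in> S"
  using assms(2,3)
proof (induction F rule: finite_induct)
  case empty
  then show ?case using op_subspace_zero[OF S] by (simp add: zero_op_def)
next
  case (insert i F)
  then have "(\<lambda>x. f i x + (\<lambda>x. \<Sum>i\<in>F. f i x) x) \<in> S"
    by (intro op_subspace_add[OF S]) auto
  then show ?case using insert.hyps by simp
qed

lemma cstar_opsysD:
  assumes "cstar_opsys A X"
  shows "A \<subseteq> BH" "X \<subseteq> BH" "A \<subseteq> X" "op_subspace A" "selfadj_set A" "selfadj_set X"
    "\<And>a b. a \<in> A \<Longrightarrow> b \<in> A \<Longrightarrow> a \<circ> b \<in> A"
    "closure (hspan {a \<xi> | a \<xi>. a \<in> A}) = UNIV"
    "X = op_closure (op_span {a \<circ> x | a x. a \<in> A \<and> x \<in> X})"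
  using assms unfolding cstar_opsys_def cstar_subalg_def by blast+

lemma cstar_opsys_op_subspace:
  assumes "cstar_opsys A X"
  shows "op_subspace X"
proof -
  have "{a \<circ> x | a x. a \<in> A \<and> x \<in> X} \<subseteq> BH"
    using cstar_opsysD(1,2)[OF assms] bop_comp by (auto simp: BH_def)
  from op_closure_span_subspace[OF this] show ?thesis
    using cstar_opsysD(9)[OF assms] by simp
qed

lemma cstar_opsys_comp_left_closed:
  assumes X: "cstar_opsys A X" and b: "bop b" and bA: "\<And>a. a \<in> A \<Longrightarrow> b \<circ> a \<in> A"
    and y: "y \<in> X"
  shows "b \<circ> y \<in> X"
proof -
  define S where "S = {a \<circ> x | a x. a \<in> A \<and> x \<in> X}"
  have "S \<subseteq> BH" using cstar_opsysD(1,2)[OF X] bop_comp by (auto simp: BH_def S_def)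
  then have SB: "op_span S \<subseteq> BH" using op_span_bop by (auto simp: BH_def)
  have XS: "X = op_closure (op_span S)" unfolding S_def by (rule cstar_opsysD(9)[OF X])
  have "(\<lambda>x. b (T x)) \<in> S" if T: "T \<in> S" for T
  proof -
    obtain a x where ax: "T = a \<circ> x" "a \<in> A" "x \<in> X" using T unfolding S_def by blast
    then have "(\<lambda>z. b (T z)) = (b \<circ> a) \<circ> x" by (simp add: comp_def)
    then show ?thesis unfolding S_def using bA ax by blast
  qed
  then have "(\<lambda>x. b (y x)) \<in> op_closure (op_span S)"
    using y XS op_closure_comp_left[OF SB op_span_comp_left[OF b] b] by blast
  then show ?thesis using XS by (simp add: comp_def)
qed

lemma unital_cstar_opsys_id:
  assumes X: "cstar_opsys A X" and "unital_alg A"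
  shows "(\<lambda>v. v) \<in> A"
proof -
  obtain e where e: "e \<in> A" "\<And>a. a \<in> A \<Longrightarrow> e \<circ> a = a"
    using assms(2) unfolding unital_alg_def by blast
  have "e = (\<lambda>v. v)"
  proof (rule bop_eq_on_dense_hspan[OF cstar_opsysD(8)[OF X] _ bop_id])
    show "bop e" using e(1) cstar_opsysD(1)[OF X] by (auto simp: BH_def)
    show "e v = v" if "v \<in> {a \<xi> | a \<xi>. a \<in> A}" for v
      using that e(2) by (auto simp: fun_eq_iff)
  qed
  then show ?thesis using e(1) by simp
qed

lemma ccpD:
  assumes "ccp X \<rho>"
  shows "\<And>x. x \<in> X \<Longrightarrow> bop (\<rho> x)"
    "\<And>x y. x \<in> X \<Longrightarrow> y \<in> X \<Longrightarrow> \<rho> (\<lambda>\<xi>. x \<xi> + y \<xi>) = (\<lambda>\<eta>. \<rho> x \<eta> + \<rho> y \<eta>)"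
    "\<And>c x. x \<in> X \<Longrightarrow> \<rho> (\<lambda>\<xi>. cscale c (x \<xi>)) = (\<lambda>\<eta>. cscale c (\<rho> x \<eta>))"
    "\<And>x. x \<in> X \<Longrightarrow> \<rho> (adj x) = adj (\<rho> x)"
    "\<And>n M. (\<forall>i<n. \<forall>j<n. M i j \<in> X) \<Longrightarrow> matnorm n (\<lambda>i j. \<rho> (M i j)) \<le> matnorm n M"
    "\<And>n M. (\<forall>i<n. \<forall>j<n. M i j \<in> X) \<Longrightarrow> mat_pos n M \<Longrightarrow> mat_pos n (\<lambda>i j. \<rho> (M i j))"
  using assms unfolding ccp_def by blast+

lemma ccp_is_adj:
  assumes "ccp X \<rho>" "x \<in> X"
  shows "is_adj (\<rho> x) (\<rho> (adj x))"
  using ccpD(4)[OF assms] bop_is_adj[OF ccpD(1)[OF assms]] by simp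

lemma ccp_comp_right:
  assumes \<rho>: "ccp X \<rho>" and sa: "selfadj_set X" and x: "x \<in> X" and a: "a \<in> X"
    and ax: "adj a \<circ> adj x \<in> X" and mult: "\<rho> (adj a \<circ> adj x) = \<rho> (adj a) \<circ> \<rho> (adj x)"
  shows "\<rho> (x \<circ> a) = \<rho> x \<circ> \<rho> a"
proof -
  have "is_adj a (adj a)" "is_adj x (adj x)" using selfadj_setD[OF sa] x a by blast+
  then have "adj (adj a \<circ> adj x) = x \<circ> a" by (blast intro: adj_eq is_adj_comp is_adj_sym)
  then have "\<rho> (x \<circ> a) = adj (\<rho> (adj a) \<circ> \<rho> (adj x))"
    using ccpD(4)[OF \<rho> ax] mult by simp
  also have "\<dots> = \<rho> x \<circ> \<rho> a"
    by (rule adj_eq[OF is_adj_comp[OF is_adj_sym is_adj_sym]]) (use ccp_is_adj[OF \<rho>] x a in blast)+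
  finally show ?thesis .
qed

section \<open>Operator matrices\<close>

lemma vnorm2_nonneg: "0 \<le> vnorm2 n \<xi>"
  unfolding vnorm2_def by (simp add: sum_nonneg)

lemma vnorm2_eq_Re: "vnorm2 n \<xi> = Re (\<Sum>i<n. cinner (\<xi> i) (\<xi> i))"
  unfolding vnorm2_def by (simp add: cinner_self_Re)

lemma vnorm2_scaleR: "vnorm2 n (\<lambda>i. scaleR r (\<xi> i)) = r\<^sup>2 * vnorm2 n \<xi>"
  unfolding vnorm2_def by (simp add: power_mult_distrib sum_distrib_left)

lemma norm_le_vnorm2: "j < n \<Longrightarrow> (norm (\<xi> j))\<^sup>2 \<le> vnorm2 n \<xi>"
  unfolding vnorm2_def by (rule member_le_sum) auto

lemma mat_app_scaleR:
  "\<forall>i<n. \<forall>j<n. bop (M i j) \<Longrightarrow> i < n \<Longrightarrow>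
    mat_app n M (\<lambda>j. scaleR r (\<xi> j)) i = scaleR r (mat_app n M \<xi> i)"
  unfolding mat_app_def by (simp add: bop_scaleR scaleR_sum_right)

lemma bop_family_bound:
  assumes "\<And>i. i \<in> I \<Longrightarrow> bop (T i)" and "finite I"
  obtains B where "B \<ge> 0" "\<And>i x. i \<in> I \<Longrightarrow> norm (T i x) \<le> B * norm x"
proof -
  have "\<forall>i\<in>I. \<exists>b\<ge>0. \<forall>x. norm (T i x) \<le> b * norm x" using assms(1) bop_bound by blast
  then obtain Bf where Bf: "\<And>i. i \<in> I \<Longrightarrow> Bf i \<ge> 0 \<and> (\<forall>x. norm (T i x) \<le> Bf i * norm x)"
    by (metis bchoice)
  define B where "B = (\<Sum>i\<in>I. Bf i)"
  have "B \<ge> 0" unfolding B_def using Bf by (simp add: sum_nonneg)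
  moreover have "norm (T i x) \<le> B * norm x" if "i \<in> I" for i x
  proof -
    have "Bf i \<le> B" unfolding B_def using that Bf assms(2) by (intro member_le_sum) auto
    then have "Bf i * norm x \<le> B * norm x" by (rule mult_right_mono) simp
    moreover have "norm (T i x) \<le> Bf i * norm x" using Bf[OF that] by blast
    ultimately show ?thesis by linarith
  qed
  ultimately show ?thesis using that by blast
qed

lemma vnorm2_mat_app_bounded:
  fixes M :: "nat \<Rightarrow> nat \<Rightarrow> ('a::chilbert \<Rightarrow> 'a)"
  assumes "\<forall>i<n. \<forall>j<n. bop (M i j)"
  shows "\<exists>K. \<forall>\<xi>. vnorm2 n \<xi> \<le> 1 \<longrightarrow> vnorm2 n (mat_app n M \<xi>) \<le> K"
proof -
  obtain B where B: "B \<ge> 0" "\<And>p x. p \<in> {..<n} \<times> {..<n} \<Longrightarrow> norm (case_prod M p x) \<le> B * norm x"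
    using bop_family_bound[of "{..<n} \<times> {..<n}" "case_prod M"] assms by auto
  have "vnorm2 n (mat_app n M \<xi>) \<le> (\<Sum>i<n. (real n * B)\<^sup>2)" if "vnorm2 n \<xi> \<le> 1" for \<xi>
  proof -
    have "norm (M i j (\<xi> j)) \<le> B" if "i < n" "j < n" for i j
    proof -
      have "(norm (\<xi> j))\<^sup>2 \<le> 1" using norm_le_vnorm2[OF that(2), of \<xi>] \<open>vnorm2 n \<xi> \<le> 1\<close> by simp
      then have "B * norm (\<xi> j) \<le> B" using B(1) by (simp add: power_le_one_iff mult_left_le)
      then show ?thesis using B(2)[of "(i, j)" "\<xi> j"] that by simp
    qed
    then have "norm (mat_app n M \<xi> i) \<le> real n * B" if "i < n" for i
      unfolding mat_app_def using that sum_mono[of "{..<n}" "\<lambda>j. norm (M i j (\<xi> j))" "\<lambda>_. B"]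
      by (simp add: order_trans[OF norm_sum])
    then show ?thesis
      unfolding vnorm2_def by (intro sum_mono power_mono) simp_all
  qed
  then show ?thesis by blast
qed

lemma matnorm_upper:
  fixes M :: "nat \<Rightarrow> nat \<Rightarrow> ('a::chilbert \<Rightarrow> 'a)"
  assumes "\<forall>i<n. \<forall>j<n. bop (M i j)" and "vnorm2 n \<xi> \<le> 1"
  shows "sqrt (vnorm2 n (mat_app n M \<xi>)) \<le> matnorm n M"
proof -
  obtain K where "\<forall>\<xi>. vnorm2 n \<xi> \<le> 1 \<longrightarrow> vnorm2 n (mat_app n M \<xi>) \<le> K"
    using vnorm2_mat_app_bounded[OF assms(1)] by blast
  then have "bdd_above {sqrt (vnorm2 n (mat_app n M \<xi>)) | \<xi>. vnorm2 n \<xi> \<le> 1}"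
    by (intro bdd_aboveI[of _ "sqrt K"]) auto
  then show ?thesis unfolding matnorm_def using assms(2) by (intro cSup_upper) auto
qed

lemma matnorm_nonneg:
  assumes "\<forall>i<n. \<forall>j<n. bop (M i j)"
  shows "0 \<le> matnorm n M"
proof -
  have "sqrt (vnorm2 n (mat_app n M (\<lambda>i. 0))) \<le> matnorm n M"
    by (rule matnorm_upper[OF assms]) (simp add: vnorm2_def)
  then show ?thesis using real_sqrt_ge_zero[OF vnorm2_nonneg[of n "mat_app n M (\<lambda>i. 0)"]] by linarith
qed

lemma vnorm2_mat_app_le:
  assumes M: "\<forall>i<n. \<forall>j<n. bop (M i j)"
  shows "vnorm2 n (mat_app n M \<xi>) \<le> (matnorm n M)\<^sup>2 * vnorm2 n \<xi>"
proof (cases "vnorm2 n \<xi> = 0")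
  case True
  then have "\<forall>j<n. \<xi> j = 0" unfolding vnorm2_def by (simp add: sum_nonneg_eq_0_iff)
  then have "vnorm2 n (mat_app n M \<xi>) = 0"
    unfolding vnorm2_def mat_app_def using M by (simp add: bop_zero)
  then show ?thesis using True by simp
next
  case False
  define r where "r = 1 / sqrt (vnorm2 n \<xi>)"
  have pos: "vnorm2 n \<xi> > 0" using False vnorm2_nonneg[of n \<xi>] by simp
  have r2: "r\<^sup>2 * vnorm2 n \<xi> = 1" using pos by (simp add: r_def power_divide)
  have "vnorm2 n (mat_app n M (\<lambda>i. scaleR r (\<xi> i))) = r\<^sup>2 * vnorm2 n (mat_app n M \<xi>)"
    using vnorm2_scaleR[of n r "mat_app n M \<xi>"] mat_app_scaleR[OF M]
    unfolding vnorm2_def by simp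
  moreover have "sqrt (vnorm2 n (mat_app n M (\<lambda>i. scaleR r (\<xi> i)))) \<le> matnorm n M"
    using r2 by (intro matnorm_upper[OF M]) (simp add: vnorm2_scaleR)
  ultimately have "sqrt (r\<^sup>2 * vnorm2 n (mat_app n M \<xi>)) \<le> matnorm n M" by simp
  then have "(sqrt (r\<^sup>2 * vnorm2 n (mat_app n M \<xi>)))\<^sup>2 \<le> (matnorm n M)\<^sup>2"
    by (intro power_mono) (simp_all add: vnorm2_nonneg)
  then have "r\<^sup>2 * vnorm2 n (mat_app n M \<xi>) \<le> (matnorm n M)\<^sup>2"
    using vnorm2_nonneg[of n "mat_app n M \<xi>"] by simp
  then have "r\<^sup>2 * vnorm2 n (mat_app n M \<xi>) * vnorm2 n \<xi> \<le> (matnorm n M)\<^sup>2 * vnorm2 n \<xi>"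
    using pos by (intro mult_right_mono) simp_all
  moreover have "r\<^sup>2 * vnorm2 n (mat_app n M \<xi>) * vnorm2 n \<xi> = vnorm2 n (mat_app n M \<xi>)"
    using r2 by (simp only: ac_simps) simp
  ultimately show ?thesis by simp
qed

lemma matnorm_le:
  assumes "t \<ge> 0" and bound: "\<And>\<xi>. vnorm2 n (mat_app n M \<xi>) \<le> t\<^sup>2 * vnorm2 n \<xi>"
  shows "matnorm n M \<le> t"
  unfolding matnorm_def
proof (rule cSup_least)
  show "{sqrt (vnorm2 n (mat_app n M \<xi>)) | \<xi>. vnorm2 n \<xi> \<le> 1} \<noteq> {}"
    using vnorm2_nonneg[of n] by (auto intro!: exI[of _ "\<lambda>i. 0"] simp: vnorm2_def)
  fix r assume "r \<in> {sqrt (vnorm2 n (mat_app n M \<xi>)) | \<xi>. vnorm2 n \<xi> \<le> 1}"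
  then obtain \<xi> where r: "r = sqrt (vnorm2 n (mat_app n M \<xi>))" "vnorm2 n \<xi> \<le> 1" by blast
  have "r \<le> sqrt (t\<^sup>2 * vnorm2 n \<xi>)" unfolding r(1) using bound by simp
  also have "\<dots> \<le> sqrt (t\<^sup>2)" using r(2) by (intro real_sqrt_le_mono mult_left_le) simp_all
  finally show "r \<le> t" using assms(1) by simp
qed

text \<open>The \<open>2n \<times> 2n\<close> operator matrix \<open>[[1, M], [M*, t\<^sup>2]]\<close>, where \<open>M*\<close> is given entrywise by
\<open>MA i j\<close>, the adjoint of \<open>M i j\<close> (hence the index swap in the lower left block).\<close>

definition block_mat :: "nat \<Rightarrow> real \<Rightarrow> (nat \<Rightarrow> nat \<Rightarrow> ('a::chilbert \<Rightarrow> 'a)) \<Rightarrow>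
    (nat \<Rightarrow> nat \<Rightarrow> ('a \<Rightarrow> 'a)) \<Rightarrow> nat \<Rightarrow> nat \<Rightarrow> ('a \<Rightarrow> 'a)" where
  "block_mat n t M MA i j =
    (if i < n then (if j < n then (if i = j then (\<lambda>v. v) else (\<lambda>v. 0)) else M i (j - n))
     else if j < n then MA j (i - n)
     else if i = j then (\<lambda>v. cscale (complex_of_real (t\<^sup>2)) v) else (\<lambda>v. 0))"

lemma mat_app_block_mat_upper:
  assumes "i < n"
  shows "mat_app (2*n) (block_mat n t M MA) \<zeta> i = \<zeta> i + mat_app n M (\<lambda>j. \<zeta> (n+j)) i"
proof -
  have "(\<Sum>j<n. block_mat n t M MA i j (\<zeta> j)) = (\<Sum>j<n. if i = j then \<zeta> j else 0)"
    using assms by (intro sum.cong) (auto simp: block_mat_def)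
  moreover have "(\<Sum>j<n. block_mat n t M MA i (n+j) (\<zeta> (n+j))) = mat_app n M (\<lambda>j. \<zeta> (n+j)) i"
    using assms unfolding mat_app_def by (intro sum.cong) (auto simp: block_mat_def)
  ultimately show ?thesis
    using assms unfolding mat_app_def mult_2 sum_lessThan_add by simp
qed

lemma mat_app_block_mat_lower:
  assumes "i < n"
  shows "mat_app (2*n) (block_mat n t M MA) \<zeta> (n+i)
    = (\<Sum>j<n. MA j i (\<zeta> j)) + cscale (complex_of_real (t\<^sup>2)) (\<zeta> (n+i))"
proof -
  have "(\<Sum>j<n. block_mat n t M MA (n+i) j (\<zeta> j)) = (\<Sum>j<n. MA j i (\<zeta> j))"
    by (intro sum.cong) (auto simp: block_mat_def)
  moreover have "(\<Sum>j<n. block_mat n t M MA (n+i) (n+j) (\<zeta> (n+j)))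
      = (\<Sum>j<n. if i = j then cscale (complex_of_real (t\<^sup>2)) (\<zeta> (n+j)) else 0)"
    by (intro sum.cong) (auto simp: block_mat_def)
  ultimately show ?thesis
    using assms unfolding mat_app_def mult_2 sum_lessThan_add by simp
qed

lemma block_mat_form:
  "(\<Sum>i<2*n. cinner (\<zeta> i) (mat_app (2*n) (block_mat n t M MA) \<zeta> i)) =
    (\<Sum>i<n. cinner (\<zeta> i) (\<zeta> i)) + (\<Sum>i<n. cinner (\<zeta> i) (mat_app n M (\<lambda>j. \<zeta> (n+j)) i))
    + (\<Sum>i<n. cinner (\<zeta> (n+i)) (\<Sum>j<n. MA j i (\<zeta> j)))
    + complex_of_real (t\<^sup>2) * (\<Sum>i<n. cinner (\<zeta> (n+i)) (\<zeta> (n+i)))"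
proof -
  have split: "(\<Sum>i<2*n. f i) = (\<Sum>i<n. f i) + (\<Sum>i<n. f (n+i))" for f :: "nat \<Rightarrow> complex"
    unfolding mult_2 by (rule sum_lessThan_add)
  show ?thesis
    unfolding split
    by (simp add: mat_app_block_mat_upper mat_app_block_mat_lower cinner_add_right sum.distrib
        cinner_cscale_right sum_distrib_left add.assoc)
qed

lemma norm_sum_cinner_le:
  "cmod (\<Sum>i<n. cinner (u i) (w i :: 'a::chilbert)) \<le> sqrt (vnorm2 n u) * sqrt (vnorm2 n w)"
proof -
  have "cmod (\<Sum>i<n. cinner (u i) (w i)) \<le> (\<Sum>i<n. \<bar>norm (u i)\<bar> * \<bar>norm (w i)\<bar>)"
    by (intro order_trans[OF norm_sum] sum_mono) (simp add: norm_cinner_le)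
  also have "\<dots> \<le> L2_set (\<lambda>i. norm (u i)) {..<n} * L2_set (\<lambda>i. norm (w i)) {..<n}"
    by (rule L2_set_mult_ineq)
  finally show ?thesis by (simp add: L2_set_def vnorm2_def)
qed

lemma block_mat_pos:
  fixes M MA :: "nat \<Rightarrow> nat \<Rightarrow> ('a::chilbert \<Rightarrow> 'a)"
  assumes adj: "\<forall>i<n. \<forall>j<n. is_adj (M i j) (MA i j)"
    and bound: "\<And>\<zeta>. vnorm2 n (mat_app n M \<zeta>) \<le> t\<^sup>2 * vnorm2 n \<zeta>" and t: "t \<ge> 0"
  shows "mat_pos (2*n) (block_mat n t M MA)"
  unfolding mat_pos_def
proof
  fix \<zeta> :: "nat \<Rightarrow> 'a"
  define v where "v = (\<lambda>j. \<zeta> (n+j))"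
  define S where "S = (\<Sum>i<n. cinner (\<zeta> i) (mat_app n M v i))"
  have "(\<Sum>i<n. cinner (\<zeta> (n+i)) (\<Sum>j<n. MA j i (\<zeta> j))) = (\<Sum>i<n. \<Sum>j<n. cinner (M j i (v i)) (\<zeta> j))"
    using adj unfolding is_adj_def v_def by (simp add: cinner_sum_right)
  also have "\<dots> = cnj S"
    unfolding S_def mat_app_def
    by (subst sum.swap) (simp add: cinner_sum_right cinner_commute[of "\<zeta> _"])
  finally have form: "(\<Sum>i<2*n. cinner (\<zeta> i) (mat_app (2*n) (block_mat n t M MA) \<zeta> i))
      = (\<Sum>i<n. cinner (\<zeta> i) (\<zeta> i)) + S + cnj S + complex_of_real (t\<^sup>2) * (\<Sum>i<n. cinner (v i) (v i))"
    unfolding block_mat_form S_def v_def by simp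
  define a where "a = sqrt (vnorm2 n \<zeta>)"
  define b where "b = t * sqrt (vnorm2 n v)"
  have "sqrt (vnorm2 n (mat_app n M v)) \<le> b"
    using real_sqrt_le_mono[OF bound[of v]] t by (simp add: b_def real_sqrt_mult)
  then have "a * sqrt (vnorm2 n (mat_app n M v)) \<le> a * b"
    by (rule mult_left_mono) (simp add: a_def vnorm2_nonneg)
  then have "\<bar>Re S\<bar> \<le> a * b"
    using abs_Re_le_cmod[of S] norm_sum_cinner_le[where n = n and u = \<zeta> and w = "mat_app n M v"]
    unfolding S_def a_def by linarith
  moreover have "a\<^sup>2 = vnorm2 n \<zeta>" "b\<^sup>2 = t\<^sup>2 * vnorm2 n v"
    by (simp_all add: a_def b_def vnorm2_nonneg power_mult_distrib)
  moreover have "0 \<le> (a - b)\<^sup>2" by simp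
  ultimately have "0 \<le> vnorm2 n \<zeta> + 2 * Re S + t\<^sup>2 * vnorm2 n v"
    unfolding power2_diff by linarith
  then show "Im (\<Sum>i<2*n. cinner (\<zeta> i) (mat_app (2*n) (block_mat n t M MA) \<zeta> i)) = 0 \<and>
      0 \<le> Re (\<Sum>i<2*n. cinner (\<zeta> i) (mat_app (2*n) (block_mat n t M MA) \<zeta> i))"
    unfolding form by (simp add: vnorm2_def cinner_self_Re cinner_self_Im)
qed

lemma block_mat_pos_1:
  assumes "is_adj x x'" "t \<ge> 0" and bound: "\<And>v. norm (x v) \<le> t * norm v"
  shows "mat_pos 2 (block_mat 1 t (\<lambda>i j. x) (\<lambda>i j. x'))"
proof -
  have "mat_pos (2*1) (block_mat 1 t (\<lambda>i j. x) (\<lambda>i j. x'))"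
  proof (rule block_mat_pos)
    show "\<forall>i<1. \<forall>j<1. is_adj x x'" using assms(1) by simp
    show "vnorm2 1 (mat_app 1 (\<lambda>i j. x) \<zeta>) \<le> t\<^sup>2 * vnorm2 1 \<zeta>" for \<zeta>
      using power_mono[OF bound[of "\<zeta> 0"]] by (simp add: vnorm2_def mat_app_def power_mult_distrib)
  qed (rule assms(2))
  then show ?thesis by simp
qed

lemma block_mat_pos_bound:
  fixes M MA :: "nat \<Rightarrow> nat \<Rightarrow> ('a::chilbert \<Rightarrow> 'a)"
  assumes M: "\<forall>i<n. \<forall>j<n. bop (M i j) \<and> is_adj (M i j) (MA i j)"
    and pos: "mat_pos (2*n) (block_mat n t M MA)"
  shows "vnorm2 n (mat_app n M \<xi>) \<le> t\<^sup>2 * vnorm2 n \<xi>"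
proof -
  define \<omega> where "\<omega> = mat_app n M \<xi>"
  define U where "U = (\<Sum>i<n. cinner (\<omega> i) (\<omega> i))"
  \<comment> \<open>evaluate the quadratic form at \<open>(\<omega>, -\<xi>)\<close>\<close>
  define \<zeta> where "\<zeta> i = (if i < n then \<omega> i else - \<xi> (i - n))" for i
  have "mat_app n M (\<lambda>j. \<zeta> (n+j)) i = - \<omega> i" if "i < n" for i
    using M that by (simp add: \<zeta>_def \<omega>_def mat_app_def bop_minus sum_negf)
  then have upper: "(\<Sum>i<n. cinner (\<zeta> i) (mat_app n M (\<lambda>j. \<zeta> (n+j)) i)) = - U"
    by (simp add: U_def \<zeta>_def cinner_minus_right sum_negf)
  have "(\<Sum>i<n. cinner (\<zeta> (n+i)) (\<Sum>j<n. MA j i (\<zeta> j))) = (\<Sum>i<n. \<Sum>j<n. - cinner (M j i (\<xi> i)) (\<omega> j))"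
    using M by (simp add: \<zeta>_def cinner_sum_right cinner_minus_left is_adj_def)
  also have "\<dots> = - U"
    by (subst sum.swap) (simp add: U_def \<omega>_def mat_app_def cinner_sum_left sum_negf)
  finally have lower: "(\<Sum>i<n. cinner (\<zeta> (n+i)) (\<Sum>j<n. MA j i (\<zeta> j))) = - U" .
  have "0 \<le> Re (\<Sum>i<2*n. cinner (\<zeta> i) (mat_app (2*n) (block_mat n t M MA) \<zeta> i))"
    using pos unfolding mat_pos_def by blast
  also have "\<dots> = t\<^sup>2 * vnorm2 n \<xi> - vnorm2 n \<omega>"
    unfolding block_mat_form upper lower
    by (simp add: \<zeta>_def U_def vnorm2_eq_Re cinner_minus_left cinner_minus_right)
  finally show ?thesis unfolding \<omega>_def by simp
qed

lemma sum_swap_pairs: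
  "(\<Sum>i\<in>I. \<Sum>j\<in>J. \<Sum>k\<in>K. \<Sum>l\<in>L. F i j k l) = (\<Sum>k\<in>K. \<Sum>l\<in>L. \<Sum>i\<in>I. \<Sum>j\<in>J. F i j k l)"
proof -
  have "(\<Sum>i\<in>I. \<Sum>j\<in>J. \<Sum>k\<in>K. \<Sum>l\<in>L. F i j k l) = (\<Sum>i\<in>I. \<Sum>k\<in>K. \<Sum>j\<in>J. \<Sum>l\<in>L. F i j k l)"
    by (rule sum.cong[OF refl], rule sum.swap)
  also have "\<dots> = (\<Sum>k\<in>K. \<Sum>i\<in>I. \<Sum>l\<in>L. \<Sum>j\<in>J. F i j k l)"
    by (subst sum.swap) (rule sum.cong[OF refl], rule sum.cong[OF refl], rule sum.swap)
  also have "\<dots> = (\<Sum>k\<in>K. \<Sum>l\<in>L. \<Sum>i\<in>I. \<Sum>j\<in>J. F i j k l)"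
    by (rule sum.cong[OF refl], rule sum.swap)
  finally show ?thesis .
qed

text \<open>The compression \<open>g* M g\<close>, written out entrywise.\<close>

lemma mat_pos_compress:
  fixes M :: "nat \<Rightarrow> nat \<Rightarrow> ('a::chilbert \<Rightarrow> 'a)"
  assumes pos: "mat_pos n M" and M: "\<forall>i<n. \<forall>j<n. bop (M i j)"
    and g: "\<forall>i<n. \<forall>k<N. bop (g i k) \<and> is_adj (g i k) (adj (g i k))"
  shows "mat_pos N (\<lambda>k l v. \<Sum>i<n. \<Sum>j<n. adj (g i k) (M i j (g j l v)))"
  unfolding mat_pos_def
proof
  fix \<zeta> :: "nat \<Rightarrow> 'a"
  define u where "u i = (\<Sum>k<N. g i k (\<zeta> k))" for i
  have "(\<Sum>k<N. cinner (\<zeta> k) (mat_app N (\<lambda>k l v. \<Sum>i<n. \<Sum>j<n. adj (g i k) (M i j (g j l v))) \<zeta> k))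
      = (\<Sum>k<N. \<Sum>l<N. \<Sum>i<n. \<Sum>j<n. cinner (g i k (\<zeta> k)) (M i j (g j l (\<zeta> l))))"
    unfolding mat_app_def using g by (simp add: cinner_sum_right is_adj_def)
  also have "\<dots> = (\<Sum>i<n. \<Sum>j<n. \<Sum>k<N. \<Sum>l<N. cinner (g i k (\<zeta> k)) (M i j (g j l (\<zeta> l))))"
    by (rule sum_swap_pairs)
  also have "\<dots> = (\<Sum>i<n. \<Sum>j<n. cinner (u i) (M i j (u j)))"
    unfolding u_def using M bop_sum
    by (intro sum.cong refl) (simp add: cinner_sum_left bop_sum, simp add: cinner_sum_right)
  also have "\<dots> = (\<Sum>i<n. cinner (u i) (mat_app n M u i))"
    unfolding mat_app_def by (simp add: cinner_sum_right)
  finally show "Im (\<Sum>k<N. cinner (\<zeta> k) (mat_app N (\<lambda>k l v. \<Sum>i<n. \<Sum>j<n. adj (g i k) (M i j (g j l v))) \<zeta> k)) = 0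
      \<and> 0 \<le> Re (\<Sum>k<N. cinner (\<zeta> k) (mat_app N (\<lambda>k l v. \<Sum>i<n. \<Sum>j<n. adj (g i k) (M i j (g j l v))) \<zeta> k))"
    using pos unfolding mat_pos_def by simp
qed

locale opsys_unitization =
  fixes A X At Xt :: "('h::chilbert \<Rightarrow> 'h) set"
  assumes opsys: "cstar_opsys A X"
    and unitization: "unitization A X At Xt"
begin

lemma opsys_unital: "cstar_opsys At Xt" and unital: "unital_alg At"
  and A_subset_At: "A \<subseteq> At" and X_subset_Xt: "X \<subseteq> Xt"
  and ideal: "\<And>a b. a \<in> A \<Longrightarrow> b \<in> At \<Longrightarrow> a \<circ> b \<in> A \<and> b \<circ> a \<in> A"
  and A_comp_Xt: "\<And>a x. a \<in> A \<Longrightarrow> x \<in> Xt \<Longrightarrow> a \<circ> x \<in> X"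
  using unitization unfolding unitization_def by blast+

lemma A_subset_X: "A \<subseteq> X" and At_subset_Xt: "At \<subseteq> Xt"
  using cstar_opsysD(3)[OF opsys] cstar_opsysD(3)[OF opsys_unital] .

lemma bop_Xt: "x \<in> Xt \<Longrightarrow> bop x" and bop_At: "a \<in> At \<Longrightarrow> bop a"
  using cstar_opsysD(1,2)[OF opsys_unital] by (auto simp: BH_def)

lemma bop_X: "x \<in> X \<Longrightarrow> bop x"
  using X_subset_Xt bop_Xt by blast

lemma adj_A: "a \<in> A \<Longrightarrow> is_adj a (adj a) \<and> adj a \<in> A"
  and adj_X: "x \<in> X \<Longrightarrow> is_adj x (adj x) \<and> adj x \<in> X"
  and adj_Xt: "x \<in> Xt \<Longrightarrow> is_adj x (adj x) \<and> adj x \<in> Xt"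
  using selfadj_setD cstar_opsysD(5,6)[OF opsys] cstar_opsysD(6)[OF opsys_unital] by blast+

lemma op_subspace_X: "op_subspace X" and op_subspace_Xt: "op_subspace Xt"
  using cstar_opsys_op_subspace[OF opsys] cstar_opsys_op_subspace[OF opsys_unital] .

lemma zero_op_A: "zero_op \<in> A"
  using op_subspace_zero[OF cstar_opsysD(4)[OF opsys]] .

lemma Xt_comp_A:
  assumes x: "x \<in> Xt" and a: "a \<in> A"
  shows "x \<circ> a \<in> X"
proof -
  have "adj a \<circ> adj x \<in> X" using A_comp_Xt adj_A[OF a] adj_Xt[OF x] by blast
  moreover have "adj (adj a \<circ> adj x) = x \<circ> a"
    using adj_A[OF a] adj_Xt[OF x] by (blast intro: adj_eq is_adj_comp is_adj_sym)
  ultimately show ?thesis using adj_X by metis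
qed

lemma At_subset_mult_alg: "At \<subseteq> mult_alg A"
  using bop_At ideal unfolding mult_alg_def by blast

lemma Xt_subset_mult_sys: "Xt \<subseteq> mult_sys A X"
  using bop_Xt Xt_comp_A A_comp_Xt unfolding mult_sys_def by blast

lemma At_comp_X: "b \<in> At \<Longrightarrow> y \<in> X \<Longrightarrow> b \<circ> y \<in> X"
  by (rule cstar_opsys_comp_left_closed[OF opsys bop_At]) (auto dest: ideal)

lemma At_comp_Xt: "b \<in> At \<Longrightarrow> x \<in> Xt \<Longrightarrow> b \<circ> x \<in> Xt"
  by (rule cstar_opsys_comp_left_closed[OF opsys_unital bop_At]) (auto intro: cstar_opsysD(7)[OF opsys_unital])

lemma id_At: "(\<lambda>v. v) \<in> At"
  by (rule unital_cstar_opsys_id[OF opsys_unital unital])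

lemma id_Xt: "(\<lambda>v. v) \<in> Xt"
  using id_At At_subset_Xt by blast

lemma block_mat_Xt:
  assumes "\<forall>i<n. \<forall>j<n. M i j \<in> Xt"
  shows "\<forall>i<2*n. \<forall>j<2*n. block_mat n t M (\<lambda>i j. adj (M i j)) i j \<in> Xt"
proof -
  have "(\<lambda>v. v) \<in> Xt" "(\<lambda>v. cscale c v) \<in> Xt" "(\<lambda>v. 0) \<in> Xt" for c
    using id_At At_subset_Xt op_subspace_cscale[OF op_subspace_Xt, of "\<lambda>v. v" c]
      op_subspace_zero[OF op_subspace_Xt] by (auto simp: zero_op_def)
  then show ?thesis using assms adj_Xt by (auto simp: block_mat_def)
qed

end

section \<open>Extending a representation to the unitization\<close>

locale unitization_rep = opsys_unitization A X At Xt
  for A X At Xt :: "('h::chilbert \<Rightarrow> 'h) set" +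
  fixes \<pi> :: "('h \<Rightarrow> 'h) \<Rightarrow> ('k::chilbert \<Rightarrow> 'k)"
  assumes rep: "opsys_rep A X \<pi>"
    and nondeg: "nondegenerate A \<pi>"
begin

lemma ccp_pi: "ccp X \<pi>"
  using rep unfolding opsys_rep_def by blast

lemma pi_comp_left: "a \<in> A \<Longrightarrow> x \<in> X \<Longrightarrow> \<pi> (a \<circ> x) = \<pi> a \<circ> \<pi> x"
  using rep unfolding opsys_rep_def by blast

lemma bop_pi: "x \<in> X \<Longrightarrow> bop (\<pi> x)"
  using ccpD(1)[OF ccp_pi] .

lemma pi_add: "x \<in> X \<Longrightarrow> y \<in> X \<Longrightarrow> \<pi> (\<lambda>\<xi>. x \<xi> + y \<xi>) = (\<lambda>\<eta>. \<pi> x \<eta> + \<pi> y \<eta>)"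
  using ccpD(2)[OF ccp_pi] .

lemma pi_cscale: "x \<in> X \<Longrightarrow> \<pi> (\<lambda>\<xi>. cscale c (x \<xi>)) = (\<lambda>\<eta>. cscale c (\<pi> x \<eta>))"
  using ccpD(3)[OF ccp_pi] .

lemma pi_is_adj: "x \<in> X \<Longrightarrow> is_adj (\<pi> x) (\<pi> (adj x))"
  by (rule ccp_is_adj[OF ccp_pi])

lemma cinner_pi_adj: "x \<in> X \<Longrightarrow> cinner (\<pi> x u) v = cinner u (\<pi> (adj x) v)"
  using pi_is_adj unfolding is_adj_def by blast

lemma zero_op_X: "zero_op \<in> X"
  using op_subspace_zero[OF op_subspace_X] .

lemma pi_zero [simp]: "\<pi> zero_op \<eta> = 0"
proof -
  have "(\<lambda>\<xi>. zero_op \<xi> + zero_op \<xi>) = zero_op" by (simp add: zero_op_def)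
  then have "\<pi> zero_op \<eta> = \<pi> zero_op \<eta> + \<pi> zero_op \<eta>"
    using pi_add[OF zero_op_X zero_op_X] by metis
  then show ?thesis by simp
qed

lemma pi_sum:
  assumes "finite F" and "\<And>i. i \<in> F \<Longrightarrow> f i \<in> X"
  shows "\<pi> (\<lambda>\<xi>. \<Sum>i\<in>F. f i \<xi>) = (\<lambda>\<eta>. \<Sum>i\<in>F. \<pi> (f i) \<eta>)"
  using assms
proof (induction F rule: finite_induct)
  case empty
  show ?case using pi_zero by (simp add: zero_op_def)
next
  case (insert i F)
  then have "(\<lambda>\<xi>. \<Sum>i\<in>F. f i \<xi>) \<in> X" by (intro op_subspace_sum[OF op_subspace_X]) auto
  then show ?case using insert pi_add[of "f i" "\<lambda>\<xi>. \<Sum>i\<in>F. f i \<xi>"] by simp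
qed

lemma pi_comp_right:
  assumes y: "y \<in> X" and a: "a \<in> A"
  shows "\<pi> (y \<circ> a) = \<pi> y \<circ> \<pi> a"
proof (rule ccp_comp_right[OF ccp_pi cstar_opsysD(6)[OF opsys] y])
  show "a \<in> X" using a A_subset_X by blast
  show "adj a \<circ> adj y \<in> X" using A_comp_Xt adj_A[OF a] adj_X[OF y] X_subset_Xt by blast
  show "\<pi> (adj a \<circ> adj y) = \<pi> (adj a) \<circ> \<pi> (adj y)"
    using pi_comp_left adj_A[OF a] adj_X[OF y] by blast
qed

lemma rep_range_dense: "closure (hspan {\<pi> a \<eta> | a \<eta>. a \<in> A}) = UNIV"
  using nondeg unfolding nondegenerate_def .

lemma bop_eq_on_rep_range:
  assumes "bop F" "bop G" "\<And>a \<eta>. a \<in> A \<Longrightarrow> F (\<pi> a \<eta>) = G (\<pi> a \<eta>)"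
  shows "F = G"
  using assms by (intro bop_eq_on_dense_hspan[OF rep_range_dense]) auto

text \<open>The extension acts on \<open>rep_comb N g \<eta> = \<Sum>k \<pi>(g\<^sub>k) \<eta>\<^sub>k\<close> by \<open>x \<mapsto> ext_comb x N g \<eta>\<close>.\<close>

definition rep_comb :: "nat \<Rightarrow> (nat \<Rightarrow> ('h \<Rightarrow> 'h)) \<Rightarrow> (nat \<Rightarrow> 'k) \<Rightarrow> 'k" where
  "rep_comb N g \<eta> = (\<Sum>k<N. \<pi> (g k) (\<eta> k))"

definition ext_comb :: "('h \<Rightarrow> 'h) \<Rightarrow> nat \<Rightarrow> (nat \<Rightarrow> ('h \<Rightarrow> 'h)) \<Rightarrow> (nat \<Rightarrow> 'k) \<Rightarrow> 'k" where
  "ext_comb x N g \<eta> = (\<Sum>k<N. \<pi> (x \<circ> g k) (\<eta> k))"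

lemma ext_comb_id: "ext_comb (\<lambda>v. v) N g \<eta> = rep_comb N g \<eta>"
  by (simp add: ext_comb_def rep_comb_def comp_def)

lemma ext_comb_minus:
  "y \<in> Xt \<Longrightarrow> \<forall>k<N. g k \<in> A \<Longrightarrow> ext_comb y N g (\<lambda>k. - \<eta> k) = - ext_comb y N g \<eta>"
  unfolding ext_comb_def using Xt_comp_A bop_pi by (simp add: bop_minus sum_negf[symmetric])

lemma rep_comb_minus:
  "\<forall>k<N. g k \<in> A \<Longrightarrow> rep_comb N g (\<lambda>k. - \<eta> k) = - rep_comb N g \<eta>"
  unfolding rep_comb_def using A_subset_X bop_pi by (simp add: bop_minus sum_negf[symmetric] subset_iff)

lemma rep_comb_cscale:
  "\<forall>k<N. g k \<in> A \<Longrightarrow> rep_comb N g (\<lambda>k. cscale c (\<eta> k)) = cscale c (rep_comb N g \<eta>)"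
  unfolding rep_comb_def using A_subset_X bop_pi by (simp add: bopD_cscale cscale_sum_right subset_iff)

lemma ext_comb_cscale:
  "y \<in> Xt \<Longrightarrow> \<forall>k<N. g k \<in> A \<Longrightarrow> ext_comb y N g (\<lambda>k. cscale c (\<eta> k)) = cscale c (ext_comb y N g \<eta>)"
  unfolding ext_comb_def using Xt_comp_A bop_pi by (simp add: bopD_cscale cscale_sum_right)

lemma ext_comb_cscale_id:
  "\<forall>k<N. g k \<in> A \<Longrightarrow> ext_comb (\<lambda>v. cscale c v) N g \<eta> = cscale c (rep_comb N g \<eta>)"
  unfolding ext_comb_def rep_comb_def using A_subset_X pi_cscale
  by (auto simp: comp_def cscale_sum_right intro!: sum.cong)

lemma ext_comb_append:
  "ext_comb x (N + N') (\<lambda>k. if k < N then g k else g' (k - N)) (\<lambda>k. if k < N then \<eta> k else \<eta>' (k - N))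
    = ext_comb x N g \<eta> + ext_comb x N' g' \<eta>'"
  unfolding ext_comb_def sum_lessThan_add by simp

lemma rep_comb_append:
  "rep_comb (N + N') (\<lambda>k. if k < N then g k else g' (k - N)) (\<lambda>k. if k < N then \<eta> k else \<eta>' (k - N))
    = rep_comb N g \<eta> + rep_comb N' g' \<eta>'"
  unfolding rep_comb_def sum_lessThan_add by simp

lemma cinner_pi_comp_adj:
  assumes x: "x \<in> Xt" and a: "a \<in> A" and b: "b \<in> A"
  shows "cinner (\<pi> (x \<circ> a) \<eta>) (\<pi> b \<zeta>) = cinner (\<pi> a \<eta>) (\<pi> (adj x \<circ> b) \<zeta>)"
proof -
  have xa: "x \<circ> a \<in> X" and xb: "adj x \<circ> b \<in> X"
    using Xt_comp_A x a b adj_Xt by blast+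
  have "adj (x \<circ> a) = adj a \<circ> adj x"
    using adj_Xt[OF x] adj_A[OF a] by (blast intro: adj_comp)
  then have "cinner (\<pi> (x \<circ> a) \<eta>) (\<pi> b \<zeta>) = cinner \<eta> (\<pi> (adj a \<circ> (adj x \<circ> b)) \<zeta>)"
    using pi_is_adj[OF xa] pi_comp_right adj_X[OF xa] b
    by (simp add: is_adj_def o_assoc)
  also have "\<dots> = cinner (\<pi> a \<eta>) (\<pi> (adj x \<circ> b) \<zeta>)"
    using pi_comp_left[OF _ xb] adj_A[OF a] pi_is_adj[of a] a A_subset_X
    by (auto simp: is_adj_def)
  finally show ?thesis .
qed

lemma cinner_ext_comb_adj:
  assumes x: "x \<in> Xt" and g: "\<forall>k<N. g k \<in> A" and c: "\<forall>l<P. c l \<in> A"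
  shows "cinner (ext_comb x N g \<eta>) (rep_comb P c \<theta>) = cinner (rep_comb N g \<eta>) (ext_comb (adj x) P c \<theta>)"
  unfolding ext_comb_def rep_comb_def cinner_sum_left cinner_sum_right
  using cinner_pi_comp_adj[OF x] g c by (intro sum.cong refl) auto

lemma pi_compress:
  fixes n N :: nat
  assumes M: "\<forall>i<n. \<forall>j<n. M i j \<in> Xt" and g: "\<forall>i<n. \<forall>k<N. g i k \<in> A"
    and kl: "k < N" "l < N"
  shows "(\<lambda>v. \<Sum>i<n. \<Sum>j<n. adj (g i k) (M i j (g j l v))) \<in> X"
    and "\<pi> (\<lambda>v. \<Sum>i<n. \<Sum>j<n. adj (g i k) (M i j (g j l v)))
      = (\<lambda>w. \<Sum>i<n. \<Sum>j<n. \<pi> (adj (g i k)) (\<pi> (M i j \<circ> g j l) w))"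
proof -
  have Mg: "M i j \<circ> g j l \<in> X" if "i < n" "j < n" for i j
    using Xt_comp_A M g kl that by blast
  have comp: "adj (g i k) \<circ> (M i j \<circ> g j l) = (\<lambda>v. adj (g i k) (M i j (g j l v)))" for i j
    by (simp add: comp_def)
  have entry: "(\<lambda>v. adj (g i k) (M i j (g j l v))) \<in> X" if "i < n" "j < n" for i j
    using A_comp_Xt adj_A Mg[OF that] X_subset_Xt g kl that unfolding comp[symmetric] by blast
  have pi_entry: "\<pi> (\<lambda>v. adj (g i k) (M i j (g j l v))) w = \<pi> (adj (g i k)) (\<pi> (M i j \<circ> g j l) w)"
    if "i < n" "j < n" for i j w
    using pi_comp_left adj_A Mg[OF that] g kl that unfolding comp[symmetric] by simp
  have row: "(\<lambda>v. \<Sum>j<n. adj (g i k) (M i j (g j l v))) \<in> X" if "i < n" for i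
    using entry that by (intro op_subspace_sum[OF op_subspace_X]) auto
  then show "(\<lambda>v. \<Sum>i<n. \<Sum>j<n. adj (g i k) (M i j (g j l v))) \<in> X"
    using op_subspace_sum[OF op_subspace_X, of "{..<n}" "\<lambda>i v. \<Sum>j<n. adj (g i k) (M i j (g j l v))"]
    by simp
  have "\<pi> (\<lambda>v. \<Sum>i<n. \<Sum>j<n. adj (g i k) (M i j (g j l v)))
      = (\<lambda>w. \<Sum>i<n. \<pi> (\<lambda>v. \<Sum>j<n. adj (g i k) (M i j (g j l v))) w)"
    using pi_sum[of "{..<n}" "\<lambda>i v. \<Sum>j<n. adj (g i k) (M i j (g j l v))"] row by simp
  also have "\<dots> = (\<lambda>w. \<Sum>i<n. \<Sum>j<n. \<pi> (adj (g i k)) (\<pi> (M i j \<circ> g j l) w))"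
    using pi_sum[of "{..<n}" "\<lambda>j v. adj (g _ k) (M _ j (g j l v))"] entry pi_entry
    by (intro ext sum.cong refl) simp
  finally show "\<pi> (\<lambda>v. \<Sum>i<n. \<Sum>j<n. adj (g i k) (M i j (g j l v)))
      = (\<lambda>w. \<Sum>i<n. \<Sum>j<n. \<pi> (adj (g i k)) (\<pi> (M i j \<circ> g j l) w))" .
qed

text \<open>Compress \<open>M\<close> by \<open>g\<close> into a positive matrix over \<open>X\<close> and apply the complete positivity
of \<open>\<pi>\<close>.\<close>

lemma rep_comb_form_nonneg:
  assumes M: "\<forall>i<n. \<forall>j<n. M i j \<in> Xt" and pos: "mat_pos n M" and g: "\<forall>i<n. \<forall>k<N. g i k \<in> A"
  shows "Im (\<Sum>i<n. \<Sum>j<n. cinner (rep_comb N (g i) \<eta>) (ext_comb (M i j) N (g j) \<eta>)) = 0 \<and>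
    0 \<le> Re (\<Sum>i<n. \<Sum>j<n. cinner (rep_comb N (g i) \<eta>) (ext_comb (M i j) N (g j) \<eta>))"
proof -
  define B where "B k l = (\<lambda>v. \<Sum>i<n. \<Sum>j<n. adj (g i k) (M i j (g j l v)))" for k l
  have "mat_pos N B"
    unfolding B_def using M g bop_Xt adj_A A_subset_X bop_X
    by (intro mat_pos_compress[OF pos]) blast+
  moreover have "B k l \<in> X" if "k < N" "l < N" for k l
    unfolding B_def using pi_compress(1)[OF M g that] .
  ultimately have "mat_pos N (\<lambda>k l. \<pi> (B k l))"
    by (intro ccpD(6)[OF ccp_pi]) blast+
  then have "Im (\<Sum>k<N. cinner (\<eta> k) (mat_app N (\<lambda>k l. \<pi> (B k l)) \<eta> k)) = 0 \<and>
      0 \<le> Re (\<Sum>k<N. cinner (\<eta> k) (mat_app N (\<lambda>k l. \<pi> (B k l)) \<eta> k))"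
    unfolding mat_pos_def by blast
  moreover have "(\<Sum>k<N. cinner (\<eta> k) (mat_app N (\<lambda>k l. \<pi> (B k l)) \<eta> k))
      = (\<Sum>k<N. \<Sum>l<N. \<Sum>i<n. \<Sum>j<n. cinner (\<eta> k) (\<pi> (adj (g i k)) (\<pi> (M i j \<circ> g j l) (\<eta> l))))"
    unfolding mat_app_def B_def using pi_compress(2)[OF M g]
    by (intro sum.cong refl) (simp add: cinner_sum_right)
  moreover have "\<dots> = (\<Sum>k<N. \<Sum>l<N. \<Sum>i<n. \<Sum>j<n. cinner (\<pi> (g i k) (\<eta> k)) (\<pi> (M i j \<circ> g j l) (\<eta> l)))"
  proof (intro sum.cong refl)
    fix k i assume "k \<in> {..<N}" "i \<in> {..<n}"
    then have "g i k \<in> X" using g A_subset_X by auto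
    then show "cinner (\<eta> k) (\<pi> (adj (g i k)) w) = cinner (\<pi> (g i k) (\<eta> k)) w" for w
      by (simp add: cinner_pi_adj)
  qed
  moreover have "\<dots> = (\<Sum>i<n. \<Sum>j<n. cinner (rep_comb N (g i) \<eta>) (ext_comb (M i j) N (g j) \<eta>))"
    unfolding rep_comb_def ext_comb_def
    by (subst sum_swap_pairs) (simp only: cinner_sum_left, simp only: cinner_sum_right)
  ultimately show ?thesis by simp
qed

lemma ext_comb_common_length:
  fixes n :: nat and Nf :: "nat \<Rightarrow> nat"
  assumes "\<forall>i<n. \<forall>k<Nf i. G i k \<in> A"
  shows "\<exists>N g \<eta>. (\<forall>i<n. \<forall>k<N. g i k \<in> A) \<and>
    (\<forall>i<n. \<forall>y\<in>Xt. ext_comb y N (g i) \<eta> = ext_comb y (Nf i) (G i) (E i))"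
  using assms
proof (induction n)
  case (Suc n)
  then obtain N g \<eta> where IH: "\<forall>i<n. \<forall>k<N. g i k \<in> A"
    "\<forall>i<n. \<forall>y\<in>Xt. ext_comb y N (g i) \<eta> = ext_comb y (Nf i) (G i) (E i)"
    by (metis less_SucI)
  define g' where "g' i k = (if i < n then (if k < N then g i k else zero_op)
    else (if k < N then zero_op else G n (k - N)))" for i k
  define \<eta>' where "\<eta>' k = (if k < N then \<eta> k else E n (k - N))" for k
  have "\<forall>i<Suc n. \<forall>k<N + Nf n. g' i k \<in> A"
    using IH(1) Suc.prems zero_op_A by (auto simp: g'_def)
  moreover have "ext_comb y (N + Nf n) (g' i) \<eta>' = ext_comb y (Nf i) (G i) (E i)"
    if i: "i < Suc n" and y: "y \<in> Xt" for i y
  proof -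
    have "y \<circ> zero_op = zero_op"
      using bop_Xt[OF y] by (simp add: fun_eq_iff zero_op_def bop_zero)
    then have zero: "\<pi> (y \<circ> zero_op) \<theta> = 0" for \<theta> by simp
    have split: "ext_comb y (N + Nf n) (g' i) \<eta>'
        = (\<Sum>k<N. \<pi> (y \<circ> g' i k) (\<eta> k)) + (\<Sum>k<Nf n. \<pi> (y \<circ> g' i (N + k)) (E n k))"
      unfolding ext_comb_def sum_lessThan_add \<eta>'_def by simp
    show ?thesis
    proof (cases "i < n")
      case True
      have "(\<Sum>k<N. \<pi> (y \<circ> g' i k) (\<eta> k)) = ext_comb y N (g i) \<eta>"
        unfolding ext_comb_def using True by (intro sum.cong) (auto simp: g'_def)
      then show ?thesis using split True IH(2) y by (simp add: g'_def zero)
    next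
      case False
      then have "i = n" using i by simp
      moreover have "(\<Sum>k<Nf n. \<pi> (y \<circ> g' n (N + k)) (E n k)) = ext_comb y (Nf n) (G n) (E n)"
        unfolding ext_comb_def by (simp add: g'_def)
      ultimately show ?thesis using split by (simp add: g'_def zero)
    qed
  qed
  ultimately show ?case by blast
qed simp

lemma ext_comb_pair_common_length:
  assumes c: "\<forall>k<P. c k \<in> A" and g: "\<forall>k<N. g k \<in> A"
  obtains N' g' \<eta>' where "\<forall>i<2::nat. \<forall>k<N'. g' i k \<in> A"
    "\<And>y. y \<in> Xt \<Longrightarrow> ext_comb y N' (g' 0) \<eta>' = ext_comb y P c \<theta>"
    "\<And>y. y \<in> Xt \<Longrightarrow> ext_comb y N' (g' 1) \<eta>' = ext_comb y N g \<eta>"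
proof -
  have "\<forall>i<2::nat. \<forall>k<(if i = 0 then P else N). (if i = 0 then c else g) k \<in> A"
    using c g by auto
  from ext_comb_common_length[OF this, where E = "\<lambda>i. if i = 0 then \<theta> else \<eta>"]
  obtain N' g' \<eta>' where g': "\<forall>i<2::nat. \<forall>k<N'. g' i k \<in> A"
    and rows: "\<forall>i<2::nat. \<forall>y\<in>Xt. ext_comb y N' (g' i) \<eta>'
      = ext_comb y (if i = 0 then P else N) (if i = 0 then c else g) (if i = 0 then \<theta> else \<eta>)"
    by blast
  show ?thesis
    by (rule that[OF g']) (use rows[rule_format, of 0] rows[rule_format, of 1] in simp_all)
qed

text \<open>Positivity of \<open>[[1, x], [x*, t\<^sup>2]]\<close>, evaluated at the pair of combinations
\<open>(\<omega>, -\<xi>)\<close>.\<close>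

lemma ext_comb_quadratic_nonneg:
  assumes x: "x \<in> Xt" and t: "t \<ge> 0" and bound: "\<And>v. norm (x v) \<le> t * norm v"
    and g: "\<forall>k<N. g k \<in> A" and c: "\<forall>k<P. c k \<in> A"
  shows "0 \<le> (norm (rep_comb P c \<theta>))\<^sup>2 - 2 * Re (cinner (rep_comb P c \<theta>) (ext_comb x N g \<eta>))
    + t\<^sup>2 * (norm (rep_comb N g \<eta>))\<^sup>2"
proof -
  define \<omega> where "\<omega> = rep_comb P c \<theta>"
  define \<xi> where "\<xi> = rep_comb N g \<eta>"
  define w where "w = ext_comb x N g \<eta>"
  define w' where "w' = ext_comb (adj x) P c \<theta>"
  define Mb where "Mb = block_mat 1 t (\<lambda>i j. x) (\<lambda>i j. adj x)"
  have pos: "mat_pos 2 Mb"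
    unfolding Mb_def using adj_Xt[OF x] t bound by (blast intro: block_mat_pos_1)
  have MbXt: "\<forall>i<2. \<forall>j<2. Mb i j \<in> Xt"
    unfolding Mb_def using block_mat_Xt[of 1 "\<lambda>i j. x" t] x by simp
  have Mb: "Mb 0 0 = (\<lambda>v. v)" "Mb 0 1 = x" "Mb 1 0 = adj x"
    "Mb 1 1 = (\<lambda>v. cscale (complex_of_real (t\<^sup>2)) v)"
    by (simp_all add: Mb_def block_mat_def)
  have Xt: "(\<lambda>v. v) \<in> Xt" "adj x \<in> Xt" "(\<lambda>v. cscale (complex_of_real (t\<^sup>2)) v) \<in> Xt"
    using id_Xt adj_Xt[OF x] op_subspace_cscale[OF op_subspace_Xt id_Xt] by auto
  obtain N' g' \<eta>' where g': "\<forall>i<2::nat. \<forall>k<N'. g' i k \<in> A"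
    and row0: "\<And>y. y \<in> Xt \<Longrightarrow> ext_comb y N' (g' 0) \<eta>' = ext_comb y P c \<theta>"
    and row1: "\<And>y. y \<in> Xt \<Longrightarrow> ext_comb y N' (g' 1) \<eta>' = ext_comb y N g (\<lambda>k. - \<eta> k)"
    using ext_comb_pair_common_length[OF c g, where \<theta> = \<theta> and \<eta> = "\<lambda>k. - \<eta> k"] by blast
  have "0 \<le> Re (\<Sum>i<2. \<Sum>j<2. cinner (rep_comb N' (g' i) \<eta>') (ext_comb (Mb i j) N' (g' j) \<eta>'))"
    using rep_comb_form_nonneg[OF MbXt pos g'] by blast
  also have "(\<Sum>i<2. \<Sum>j<2. cinner (rep_comb N' (g' i) \<eta>') (ext_comb (Mb i j) N' (g' j) \<eta>'))
      = cinner \<omega> \<omega> + cinner \<omega> (- w) + cinner (- \<xi>) w'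
        + cinner (- \<xi>) (- cscale (complex_of_real (t\<^sup>2)) \<xi>)"
  proof -
    have sum2: "(\<Sum>i<2. f i) = f 0 + f 1" for f :: "nat \<Rightarrow> complex"
      by (simp add: numeral_2_eq_2)
    have "rep_comb N' (g' 0) \<eta>' = \<omega>" "rep_comb N' (g' 1) \<eta>' = - \<xi>"
      "ext_comb (Mb 0 0) N' (g' 0) \<eta>' = \<omega>" "ext_comb (Mb 0 1) N' (g' 1) \<eta>' = - w"
      "ext_comb (Mb 1 0) N' (g' 0) \<eta>' = w'"
      "ext_comb (Mb 1 1) N' (g' 1) \<eta>' = - cscale (complex_of_real (t\<^sup>2)) \<xi>"
      unfolding Mb using row0 row1 Xt x ext_comb_minus[OF _ g]
      by (simp_all add: ext_comb_id[symmetric] ext_comb_cscale_id[OF g] \<omega>_def w_def w'_def \<xi>_def)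
    then show ?thesis unfolding sum2 by (simp add: add.assoc)
  qed
  also have "Re \<dots> = (norm \<omega>)\<^sup>2 - 2 * Re (cinner \<omega> w) + t\<^sup>2 * (norm \<xi>)\<^sup>2"
  proof -
    have "cinner \<xi> w' = cinner w \<omega>"
      unfolding \<xi>_def w'_def w_def \<omega>_def by (rule cinner_ext_comb_adj[OF x g c, symmetric])
    then show ?thesis
      by (simp add: cinner_minus_left cinner_minus_right cinner_cscale_right cinner_self_Re
          cinner_commute[of w \<omega>])
  qed
  finally show ?thesis unfolding \<omega>_def w_def \<xi>_def .
qed

lemma hspan_rep_range:
  assumes "y \<in> hspan {\<pi> a \<eta> | a \<eta>. a \<in> A}"
  shows "\<exists>N g \<eta>. (\<forall>k<N. g k \<in> A) \<and> y = rep_comb N g \<eta>"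
proof -
  obtain n :: nat and c v where v: "\<forall>i<n. v i \<in> {\<pi> a \<eta> | a \<eta>. a \<in> A}"
    and y: "y = (\<Sum>i<n. cscale (c i) (v i))"
    using assms unfolding hspan_def by blast
  have "\<forall>i\<in>{..<n}. \<exists>p. fst p \<in> A \<and> v i = \<pi> (fst p) (snd p)"
    using v by (force intro: exI[of _ "(_, _)"])
  from bchoice[OF this] obtain p
    where p: "\<forall>i\<in>{..<n}. fst (p i) \<in> A \<and> v i = \<pi> (fst (p i)) (snd (p i))" ..
  have "y = rep_comb n (\<lambda>i. fst (p i)) (\<lambda>i. cscale (c i) (snd (p i)))"
    unfolding y rep_comb_def using p A_subset_X bop_pi by (auto simp: bopD_cscale intro!: sum.cong)
  then show ?thesis using p
    by (intro exI[of _ n] exI[of _ "\<lambda>i. fst (p i)"] exI[of _ "\<lambda>i. cscale (c i) (snd (p i))"]) auto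
qed

definition approximates :: "'k \<Rightarrow> (nat \<Rightarrow> nat) \<Rightarrow> (nat \<Rightarrow> nat \<Rightarrow> ('h \<Rightarrow> 'h)) \<Rightarrow> (nat \<Rightarrow> nat \<Rightarrow> 'k) \<Rightarrow> bool"
  where "approximates u N g \<eta> \<longleftrightarrow>
    (\<forall>j k. k < N j \<longrightarrow> g j k \<in> A) \<and> (\<lambda>j. rep_comb (N j) (g j) (\<eta> j)) \<longlonglongrightarrow> u"

lemma approximation_exists: "\<exists>N g \<eta>. approximates u N g \<eta>"
proof -
  obtain s where s: "\<And>j. s j \<in> hspan {\<pi> a \<eta> | a \<eta>. a \<in> A}" "s \<longlonglongrightarrow> u"
    using rep_range_dense closure_sequential by blast
  have "\<forall>j. \<exists>p. (\<forall>k<fst p. fst (snd p) k \<in> A) \<and> s j = rep_comb (fst p) (fst (snd p)) (snd (snd p))"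
    using hspan_rep_range[OF s(1)] by (metis fst_conv snd_conv)
  from choice[OF this] obtain p where p: "\<forall>j. (\<forall>k<fst (p j). fst (snd (p j)) k \<in> A)
      \<and> s j = rep_comb (fst (p j)) (fst (snd (p j))) (snd (snd (p j)))" ..
  then have "(\<lambda>j. rep_comb (fst (p j)) (fst (snd (p j))) (snd (snd (p j)))) = s" by auto
  then have "approximates u (\<lambda>j. fst (p j)) (\<lambda>j. fst (snd (p j))) (\<lambda>j. snd (snd (p j)))"
    unfolding approximates_def using s(2) p by simp
  then show ?thesis by blast
qed

lemma approximations_exist:
  obtains N g \<eta> where "\<And>i. approximates (\<xi> i) (N i) (g i) (\<eta> i)"
proof -
  have "\<forall>i. \<exists>p. approximates (\<xi> i) (fst p) (fst (snd p)) (snd (snd p))"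
    using approximation_exists by (metis fst_conv snd_conv)
  from choice[OF this] obtain p
    where "\<forall>i. approximates (\<xi> i) (fst (p i)) (fst (snd (p i))) (snd (snd (p i)))" ..
  then show ?thesis
    using that[of "\<lambda>i. fst (p i)" "\<lambda>i. fst (snd (p i))" "\<lambda>i. snd (snd (p i))"] by blast
qed

lemma norm_ext_comb_le:
  assumes x: "x \<in> Xt" and t: "t \<ge> 0" and bound: "\<And>v. norm (x v) \<le> t * norm v"
    and g: "\<forall>k<N. g k \<in> A"
  shows "norm (ext_comb x N g \<eta>) \<le> t * norm (rep_comb N g \<eta>)"
proof -
  define w where "w = ext_comb x N g \<eta>"
  define \<xi> where "\<xi> = rep_comb N g \<eta>"
  define f where "f \<omega> = (norm \<omega>)\<^sup>2 - 2 * Re (cinner \<omega> w) + t\<^sup>2 * (norm \<xi>)\<^sup>2" for \<omega>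
  obtain P c \<theta> where w: "approximates w P c \<theta>" using approximation_exists by blast
  \<comment> \<open>let the first argument of the quadratic estimate tend to \<open>w\<close>\<close>
  have lim: "(\<lambda>j. rep_comb (P j) (c j) (\<theta> j)) \<longlonglongrightarrow> w" and c: "\<And>j. \<forall>k<P j. c j k \<in> A"
    using w by (simp_all add: approximates_def)
  have "(\<lambda>j. f (rep_comb (P j) (c j) (\<theta> j))) \<longlonglongrightarrow> f w"
    unfolding f_def
    by (intro tendsto_add tendsto_diff tendsto_mult tendsto_const tendsto_power tendsto_norm
        tendsto_Re tendsto_cinner lim)
  moreover have "\<forall>j. 0 \<le> f (rep_comb (P j) (c j) (\<theta> j))"
    unfolding f_def w_def \<xi>_def using ext_comb_quadratic_nonneg[OF x t bound g c] by blast
  ultimately have "0 \<le> f w" by (intro LIMSEQ_le_const) auto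
  then have "(norm w)\<^sup>2 \<le> (t * norm \<xi>)\<^sup>2"
    unfolding f_def by (simp add: cinner_self_Re power_mult_distrib)
  then have "norm w \<le> t * norm \<xi>" by (rule power2_le_imp_le) (use t in simp)
  then show ?thesis unfolding w_def \<xi>_def .
qed

lemma norm_ext_comb_diff_le:
  assumes x: "x \<in> Xt" and t: "t \<ge> 0" and bound: "\<And>v. norm (x v) \<le> t * norm v"
    and g: "\<forall>k<N. g k \<in> A" and g': "\<forall>k<N'. g' k \<in> A"
  shows "norm (ext_comb x N g \<eta> - ext_comb x N' g' \<eta>') \<le> t * norm (rep_comb N g \<eta> - rep_comb N' g' \<eta>')"
proof -
  define G where "G = (\<lambda>k. if k < N then g k else g' (k - N))"
  define E where "E = (\<lambda>k. if k < N then \<eta> k else - \<eta>' (k - N))"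
  have "\<forall>k<N + N'. G k \<in> A" using g g' by (auto simp: G_def)
  note le = norm_ext_comb_le[OF x t bound this, of E]
  have "rep_comb (N + N') G E = rep_comb N g \<eta> - rep_comb N' g' \<eta>'"
    unfolding G_def E_def using rep_comb_append[of N N' g g' \<eta> "\<lambda>k. - \<eta>' k"] rep_comb_minus[OF g']
    by simp
  moreover have "ext_comb x (N + N') G E = ext_comb x N g \<eta> - ext_comb x N' g' \<eta>'"
    unfolding G_def E_def using ext_comb_append[of x N N' g g' \<eta> "\<lambda>k. - \<eta>' k"] ext_comb_minus[OF x g']
    by simp
  ultimately show ?thesis using le by simp
qed

lemma ext_comb_Cauchy:
  assumes x: "x \<in> Xt" and u: "approximates u N g \<eta>"
  shows "Cauchy (\<lambda>j. ext_comb x (N j) (g j) (\<eta> j))"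
proof (rule metric_CauchyI)
  obtain t where t: "t \<ge> 0" "\<And>v. norm (x v) \<le> t * norm v" using bop_bound[OF bop_Xt[OF x]] by blast
  have "Cauchy (\<lambda>j. rep_comb (N j) (g j) (\<eta> j))"
    using u unfolding approximates_def by (blast intro: LIMSEQ_imp_Cauchy)
  fix e :: real assume "e > 0"
  then obtain M where M: "\<And>m n. m \<ge> M \<Longrightarrow> n \<ge> M \<Longrightarrow>
      dist (rep_comb (N m) (g m) (\<eta> m)) (rep_comb (N n) (g n) (\<eta> n)) < e / (t + 1)"
    using metric_CauchyD[OF \<open>Cauchy _\<close>, of "e / (t + 1)"] t(1) by auto
  have "dist (ext_comb x (N m) (g m) (\<eta> m)) (ext_comb x (N n) (g n) (\<eta> n)) < e"
    if "m \<ge> M" "n \<ge> M" for m n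
  proof -
    have "dist (ext_comb x (N m) (g m) (\<eta> m)) (ext_comb x (N n) (g n) (\<eta> n))
        \<le> t * dist (rep_comb (N m) (g m) (\<eta> m)) (rep_comb (N n) (g n) (\<eta> n))"
      unfolding dist_norm using norm_ext_comb_diff_le[OF x t] u by (simp add: approximates_def)
    also have "\<dots> \<le> t * (e / (t + 1))" using M[OF that] t(1) by (intro mult_left_mono) simp_all
    also have "\<dots> < e" using \<open>e > 0\<close> t(1) by (simp add: field_simps)
    finally show ?thesis .
  qed
  then show "\<exists>M. \<forall>m\<ge>M. \<forall>n\<ge>M. dist (ext_comb x (N m) (g m) (\<eta> m)) (ext_comb x (N n) (g n) (\<eta> n)) < e"
    by blast
qed

lemma ext_comb_limit_unique:
  assumes x: "x \<in> Xt" and u: "approximates u N g \<eta>" "approximates u N' g' \<eta>'"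
    and w: "(\<lambda>j. ext_comb x (N j) (g j) (\<eta> j)) \<longlonglongrightarrow> w"
    and w': "(\<lambda>j. ext_comb x (N' j) (g' j) (\<eta>' j)) \<longlonglongrightarrow> w'"
  shows "w = w'"
proof -
  obtain t where t: "t \<ge> 0" "\<And>v. norm (x v) \<le> t * norm v" using bop_bound[OF bop_Xt[OF x]] by blast
  define R where "R j = rep_comb (N j) (g j) (\<eta> j) - rep_comb (N' j) (g' j) (\<eta>' j)" for j
  have "R \<longlonglongrightarrow> u - u"
    unfolding R_def using u by (intro tendsto_diff) (simp_all add: approximates_def)
  then have "(\<lambda>j. norm (R j)) \<longlonglongrightarrow> 0" by (simp add: tendsto_norm_zero)
  then have z: "(\<lambda>j. t * norm (R j)) \<longlonglongrightarrow> 0" by (rule tendsto_mult_right_zero)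
  have "norm (ext_comb x (N j) (g j) (\<eta> j) - ext_comb x (N' j) (g' j) (\<eta>' j)) \<le> t * norm (R j)" for j
    unfolding R_def using norm_ext_comb_diff_le[OF x t] u by (simp add: approximates_def)
  then have "(\<lambda>j. ext_comb x (N j) (g j) (\<eta> j) - ext_comb x (N' j) (g' j) (\<eta>' j)) \<longlonglongrightarrow> 0"
    by (intro Lim_null_comparison[OF _ z]) simp
  moreover have "(\<lambda>j. ext_comb x (N j) (g j) (\<eta> j) - ext_comb x (N' j) (g' j) (\<eta>' j)) \<longlonglongrightarrow> w - w'"
    using w w' by (rule tendsto_diff)
  ultimately have "w - w' = 0" using LIMSEQ_unique by blast
  then show ?thesis by simp
qed

definition pi_ext :: "('h \<Rightarrow> 'h) \<Rightarrow> 'k \<Rightarrow> 'k" where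
  "pi_ext x u = (THE w. \<exists>N g \<eta>. approximates u N g \<eta> \<and> (\<lambda>j. ext_comb x (N j) (g j) (\<eta> j)) \<longlonglongrightarrow> w)"

lemma pi_ext_limit:
  assumes x: "x \<in> Xt" and u: "approximates u N g \<eta>"
  shows "(\<lambda>j. ext_comb x (N j) (g j) (\<eta> j)) \<longlonglongrightarrow> pi_ext x u"
proof -
  obtain w where w: "(\<lambda>j. ext_comb x (N j) (g j) (\<eta> j)) \<longlonglongrightarrow> w"
    using ext_comb_Cauchy[OF x u] Cauchy_convergent_iff convergent_def by blast
  have "pi_ext x u = w"
    unfolding pi_ext_def
  proof (rule the_equality)
    show "\<exists>N g \<eta>. approximates u N g \<eta> \<and> (\<lambda>j. ext_comb x (N j) (g j) (\<eta> j)) \<longlonglongrightarrow> w"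
      using u w by blast
    show "w' = w" if "\<exists>N g \<eta>. approximates u N g \<eta> \<and> (\<lambda>j. ext_comb x (N j) (g j) (\<eta> j)) \<longlonglongrightarrow> w'" for w'
      using that ext_comb_limit_unique[OF x _ u _ w] by blast
  qed
  then show ?thesis using w by simp
qed

lemma pi_ext_rep_comb:
  assumes x: "x \<in> Xt" and g: "\<forall>k<N. g k \<in> A"
  shows "pi_ext x (rep_comb N g \<eta>) = ext_comb x N g \<eta>"
proof -
  have "approximates (rep_comb N g \<eta>) (\<lambda>j. N) (\<lambda>j. g) (\<lambda>j. \<eta>)"
    using g by (simp add: approximates_def)
  from pi_ext_limit[OF x this] show ?thesis by (simp add: LIMSEQ_const_iff)
qed

lemma pi_ext_pi: "x \<in> Xt \<Longrightarrow> a \<in> A \<Longrightarrow> pi_ext x (\<pi> a \<eta>) = \<pi> (x \<circ> a) \<eta>"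
  using pi_ext_rep_comb[of x 1 "\<lambda>k. a" "\<lambda>k. \<eta>"] by (simp add: rep_comb_def ext_comb_def)

lemma pi_ext_add:
  assumes x: "x \<in> Xt"
  shows "pi_ext x (u + v) = pi_ext x u + pi_ext x v"
proof -
  obtain N g \<eta> where u: "approximates u N g \<eta>" using approximation_exists by blast
  obtain N' g' \<eta>' where v: "approximates v N' g' \<eta>'" using approximation_exists by blast
  define G where "G j = (\<lambda>k. if k < N j then g j k else g' j (k - N j))" for j
  define E where "E j = (\<lambda>k. if k < N j then \<eta> j k else \<eta>' j (k - N j))" for j
  have "\<forall>j k. k < N j + N' j \<longrightarrow> G j k \<in> A"
    using u v by (auto simp: approximates_def G_def)
  moreover have "(\<lambda>j. rep_comb (N j + N' j) (G j) (E j)) \<longlonglongrightarrow> u + v"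
    unfolding G_def E_def rep_comb_append using u v by (intro tendsto_add) (simp_all add: approximates_def)
  ultimately have "approximates (u + v) (\<lambda>j. N j + N' j) G E"
    by (simp add: approximates_def)
  from pi_ext_limit[OF x this] have "(\<lambda>j. ext_comb x (N j) (g j) (\<eta> j) + ext_comb x (N' j) (g' j) (\<eta>' j))
      \<longlonglongrightarrow> pi_ext x (u + v)"
    unfolding G_def E_def ext_comb_append .
  moreover have "(\<lambda>j. ext_comb x (N j) (g j) (\<eta> j) + ext_comb x (N' j) (g' j) (\<eta>' j))
      \<longlonglongrightarrow> pi_ext x u + pi_ext x v"
    using pi_ext_limit[OF x u] pi_ext_limit[OF x v] by (rule tendsto_add)
  ultimately show ?thesis using LIMSEQ_unique by blast
qed

lemma pi_ext_cscale:
  assumes x: "x \<in> Xt"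
  shows "pi_ext x (cscale c u) = cscale c (pi_ext x u)"
proof -
  obtain N g \<eta> where u: "approximates u N g \<eta>" using approximation_exists by blast
  then have g: "\<And>j. \<forall>k<N j. g j k \<in> A" by (simp add: approximates_def)
  have "approximates (cscale c u) N g (\<lambda>j k. cscale c (\<eta> j k))"
    using u tendsto_cscale[of "\<lambda>j. rep_comb (N j) (g j) (\<eta> j)" u] g rep_comb_cscale
    unfolding approximates_def by simp
  from pi_ext_limit[OF x this]
  have "(\<lambda>j. cscale c (ext_comb x (N j) (g j) (\<eta> j))) \<longlonglongrightarrow> pi_ext x (cscale c u)"
    using ext_comb_cscale[OF x g] by simp
  moreover have "(\<lambda>j. cscale c (ext_comb x (N j) (g j) (\<eta> j))) \<longlonglongrightarrow> cscale c (pi_ext x u)"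
    by (rule tendsto_cscale[OF pi_ext_limit[OF x u]])
  ultimately show ?thesis using LIMSEQ_unique by blast
qed

lemma norm_pi_ext_le:
  assumes x: "x \<in> Xt" and t: "t \<ge> 0" and bound: "\<And>v. norm (x v) \<le> t * norm v"
  shows "norm (pi_ext x u) \<le> t * norm u"
proof -
  obtain N g \<eta> where u: "approximates u N g \<eta>" using approximation_exists by blast
  have "(\<lambda>j. t * norm (rep_comb (N j) (g j) (\<eta> j)) - norm (ext_comb x (N j) (g j) (\<eta> j)))
      \<longlonglongrightarrow> t * norm u - norm (pi_ext x u)"
    using u pi_ext_limit[OF x u] unfolding approximates_def by (intro tendsto_intros) auto
  moreover have "\<forall>j. 0 \<le> t * norm (rep_comb (N j) (g j) (\<eta> j)) - norm (ext_comb x (N j) (g j) (\<eta> j))"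
    using norm_ext_comb_le[OF x t bound] u by (simp add: approximates_def)
  ultimately have "0 \<le> t * norm u - norm (pi_ext x u)" by (intro LIMSEQ_le_const) auto
  then show ?thesis by simp
qed

lemma bop_pi_ext:
  assumes x: "x \<in> Xt"
  shows "bop (pi_ext x)"
proof -
  obtain t where "t \<ge> 0" "\<And>v. norm (x v) \<le> t * norm v" using bop_bound[OF bop_Xt[OF x]] by blast
  then show ?thesis
    unfolding bop_def using pi_ext_add[OF x] pi_ext_cscale[OF x] norm_pi_ext_le[OF x] by blast
qed

lemma pi_ext_extends: "y \<in> X \<Longrightarrow> pi_ext y = \<pi> y"
  using X_subset_Xt pi_ext_pi pi_comp_right
  by (intro bop_eq_on_rep_range bop_pi_ext bop_pi) auto

lemma pi_ext_is_adj:
  assumes x: "x \<in> Xt"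
  shows "is_adj (pi_ext x) (pi_ext (adj x))"
proof (rule is_adj_on_dense_hspan[OF rep_range_dense bop_pi_ext[OF x] bop_pi_ext])
  show "adj x \<in> Xt" using adj_Xt[OF x] by blast
  show "cinner (pi_ext x u) v = cinner u (pi_ext (adj x) v)"
    if "u \<in> {\<pi> a \<eta> | a \<eta>. a \<in> A}" "v \<in> {\<pi> a \<eta> | a \<eta>. a \<in> A}" for u v
    using that pi_ext_pi[OF x] pi_ext_pi[OF \<open>adj x \<in> Xt\<close>] cinner_pi_comp_adj[OF x] by auto
qed

lemma pi_ext_adj: "x \<in> Xt \<Longrightarrow> pi_ext (adj x) = adj (pi_ext x)"
  using adj_eq[OF pi_ext_is_adj] by metis

lemma pi_ext_pi_X:
  assumes b: "b \<in> At" and y: "y \<in> X"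
  shows "pi_ext b (\<pi> y \<eta>) = \<pi> (b \<circ> y) \<eta>"
proof -
  have bt: "b \<in> Xt" using b At_subset_Xt by blast
  have adjb: "is_adj b (adj b)" "adj b \<in> Xt" using adj_Xt[OF bt] by auto
  have "pi_ext b (\<pi> y \<eta>) - \<pi> (b \<circ> y) \<eta> = 0"
  proof (rule orthogonal_dense_hspan_zero[OF rep_range_dense])
    fix v assume "v \<in> {\<pi> a \<eta> | a \<eta>. a \<in> A}"
    then obtain c \<zeta> where v: "v = \<pi> c \<zeta>" and c: "c \<in> A" by blast
    have adjc: "is_adj c (adj c)" "adj c \<in> A" using adj_A[OF c] by auto
    have bc: "adj b \<circ> c \<in> X" using Xt_comp_A[OF adjb(2) c] .
    have adj_bc: "adj (adj b \<circ> c) = adj c \<circ> b"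
      using adj_comp[OF is_adj_adj[OF is_adj_sym[OF adjb(1)]] adjc(1)] adj_adj[OF adjb(1)] by simp
    have "cinner (\<pi> c \<zeta>) (pi_ext b (\<pi> y \<eta>)) = cinner (pi_ext (adj b) (\<pi> c \<zeta>)) (\<pi> y \<eta>)"
      using is_adj_sym[OF pi_ext_is_adj[OF bt]] unfolding is_adj_def by simp
    also have "\<dots> = cinner \<zeta> (\<pi> (adj (adj b \<circ> c)) (\<pi> y \<eta>))"
      using pi_ext_pi[OF adjb(2) c] cinner_pi_adj[OF bc] by simp
    also have "\<dots> = cinner \<zeta> (\<pi> ((adj c \<circ> b) \<circ> y) \<eta>)"
      using adj_bc pi_comp_left[of "adj c \<circ> b" y] ideal[OF adjc(2) b] y
      by simp
    also have "\<dots> = cinner (\<pi> c \<zeta>) (\<pi> (b \<circ> y) \<eta>)"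
      using pi_comp_left[OF adjc(2) At_comp_X[OF b y]] cinner_pi_adj[of c] c A_subset_X
      by (auto simp: o_assoc)
    finally show "cinner v (pi_ext b (\<pi> y \<eta>) - \<pi> (b \<circ> y) \<eta>) = 0"
      unfolding v by (simp add: cinner_diff_right)
  qed
  then show ?thesis by simp
qed

lemma pi_ext_comp:
  assumes b: "b \<in> At" and x: "x \<in> Xt"
  shows "pi_ext (b \<circ> x) = pi_ext b \<circ> pi_ext x"
proof (rule bop_eq_on_rep_range)
  show "bop (pi_ext (b \<circ> x))" by (rule bop_pi_ext[OF At_comp_Xt[OF b x]])
  show "bop (pi_ext b \<circ> pi_ext x)" using b At_subset_Xt x by (blast intro: bop_comp bop_pi_ext)
  show "pi_ext (b \<circ> x) (\<pi> a \<eta>) = (pi_ext b \<circ> pi_ext x) (\<pi> a \<eta>)" if a: "a \<in> A" for a \<eta>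
    using pi_ext_pi[OF At_comp_Xt[OF b x] a] pi_ext_pi[OF x a] pi_ext_pi_X[OF b Xt_comp_A[OF x a]]
    by (simp add: o_assoc)
qed

lemma pi_ext_add_op:
  assumes x: "x \<in> Xt" and y: "y \<in> Xt"
  shows "pi_ext (\<lambda>v. x v + y v) = (\<lambda>u. pi_ext x u + pi_ext y u)"
proof (rule bop_eq_on_rep_range)
  have xy: "(\<lambda>v. x v + y v) \<in> Xt" by (rule op_subspace_add[OF op_subspace_Xt x y])
  then show "bop (pi_ext (\<lambda>v. x v + y v))" by (rule bop_pi_ext)
  show "bop (\<lambda>u. pi_ext x u + pi_ext y u)" using x y by (intro bop_add bop_pi_ext)
  show "pi_ext (\<lambda>v. x v + y v) (\<pi> a \<eta>) = pi_ext x (\<pi> a \<eta>) + pi_ext y (\<pi> a \<eta>)" if a: "a \<in> A" for a \<eta>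
    using pi_ext_pi[OF xy a] pi_ext_pi[OF x a] pi_ext_pi[OF y a] pi_add[OF Xt_comp_A[OF x a] Xt_comp_A[OF y a]]
    by (simp add: comp_def)
qed

lemma pi_ext_cscale_op:
  assumes x: "x \<in> Xt"
  shows "pi_ext (\<lambda>v. cscale c (x v)) = (\<lambda>u. cscale c (pi_ext x u))"
proof (rule bop_eq_on_rep_range)
  have cx: "(\<lambda>v. cscale c (x v)) \<in> Xt" by (rule op_subspace_cscale[OF op_subspace_Xt x])
  then show "bop (pi_ext (\<lambda>v. cscale c (x v)))" by (rule bop_pi_ext)
  show "bop (\<lambda>u. cscale c (pi_ext x u))" using x by (intro bop_cscale bop_pi_ext)
  show "pi_ext (\<lambda>v. cscale c (x v)) (\<pi> a \<eta>) = cscale c (pi_ext x (\<pi> a \<eta>))" if a: "a \<in> A" for a \<eta>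
    using pi_ext_pi[OF cx a] pi_ext_pi[OF x a] pi_cscale[OF Xt_comp_A[OF x a]]
    by (simp add: comp_def)
qed

lemma pi_ext_id: "pi_ext (\<lambda>v. v) = (\<lambda>u. u)"
  using pi_ext_pi[OF id_Xt] by (intro bop_eq_on_rep_range bop_pi_ext id_Xt bop_id) (simp add: comp_def)

lemma pi_ext_cscale_id: "pi_ext (\<lambda>v. cscale c v) = (\<lambda>u. cscale c u)"
  using pi_ext_cscale_op[OF id_Xt, of c] pi_ext_id by simp

lemma pi_ext_zero: "pi_ext (\<lambda>v. 0) = (\<lambda>u. 0)"
  using pi_ext_extends[OF zero_op_X] pi_zero by (auto simp: zero_op_def)

lemma mat_pos_pi_ext:
  assumes M: "\<forall>i<n. \<forall>j<n. M i j \<in> Xt" and pos: "mat_pos n M"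
  shows "mat_pos n (\<lambda>i j. pi_ext (M i j))"
  unfolding mat_pos_def
proof
  fix \<xi> :: "nat \<Rightarrow> 'k"
  define F where "F \<zeta> = (\<Sum>i<n. cinner (\<zeta> i) (mat_app n (\<lambda>i j. pi_ext (M i j)) \<zeta> i))" for \<zeta>
  obtain N g \<eta> where approx: "\<And>i. approximates (\<xi> i) (N i) (g i) (\<eta> i)"
    using approximations_exist by blast
  \<comment> \<open>approximate all components of \<open>\<xi>\<close> simultaneously, and use a common index range at each stage\<close>
  define \<xi>s where "\<xi>s j i = rep_comb (N i j) (g i j) (\<eta> i j)" for j i
  have nonneg: "Im (F (\<xi>s j)) = 0 \<and> 0 \<le> Re (F (\<xi>s j))" for j
  proof -
    have lengths: "\<forall>i<n. \<forall>k<N i j. g i j k \<in> A" using approx by (simp add: approximates_def)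
    obtain N' g' \<eta>' where g': "\<forall>i<n. \<forall>k<N'. g' i k \<in> A"
      and rows: "\<forall>i<n. \<forall>y\<in>Xt. ext_comb y N' (g' i) \<eta>' = ext_comb y (N i j) (g i j) (\<eta> i j)"
      using ext_comb_common_length[OF lengths, where E = "\<lambda>i. \<eta> i j"] by blast
    then have "\<xi>s j i = rep_comb N' (g' i) \<eta>'" if "i < n" for i
      using that id_Xt by (simp add: \<xi>s_def ext_comb_id[symmetric])
    then have "F (\<xi>s j) = (\<Sum>i<n. \<Sum>i'<n. cinner (rep_comb N' (g' i) \<eta>') (ext_comb (M i i') N' (g' i') \<eta>'))"
      unfolding F_def mat_app_def using M g' pi_ext_rep_comb
      by (simp add: cinner_sum_right)
    then show ?thesis using rep_comb_form_nonneg[OF M pos g'] by simp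
  qed
  have "(\<lambda>j. F (\<xi>s j)) \<longlonglongrightarrow> F \<xi>"
    unfolding F_def mat_app_def \<xi>s_def using approx M
    by (intro tendsto_sum tendsto_cinner bop_tendsto[OF bop_pi_ext]) (auto simp: approximates_def)
  then have "(\<lambda>j. Im (F (\<xi>s j))) \<longlonglongrightarrow> Im (F \<xi>)" "(\<lambda>j. Re (F (\<xi>s j))) \<longlonglongrightarrow> Re (F \<xi>)"
    by (auto intro: tendsto_Im tendsto_Re)
  then have "Im (F \<xi>) = 0" "0 \<le> Re (F \<xi>)"
    using nonneg by (auto simp: LIMSEQ_const_iff intro: LIMSEQ_le_const)
  then show "Im (\<Sum>i<n. cinner (\<xi> i) (mat_app n (\<lambda>i j. pi_ext (M i j)) \<xi> i)) = 0 \<and>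
      0 \<le> Re (\<Sum>i<n. cinner (\<xi> i) (mat_app n (\<lambda>i j. pi_ext (M i j)) \<xi> i))"
    unfolding F_def by simp
qed

lemma matnorm_pi_ext_le:
  assumes M: "\<forall>i<n. \<forall>j<n. M i j \<in> Xt"
  shows "matnorm n (\<lambda>i j. pi_ext (M i j)) \<le> matnorm n M"
proof (rule matnorm_le)
  define t where "t = matnorm n M"
  have bM: "\<forall>i<n. \<forall>j<n. bop (M i j)" using M bop_Xt by blast
  show "0 \<le> matnorm n M" by (rule matnorm_nonneg[OF bM])
  have "mat_pos (2*n) (block_mat n t M (\<lambda>i j. adj (M i j)))"
    using M adj_Xt vnorm2_mat_app_le[OF bM] matnorm_nonneg[OF bM]
    by (intro block_mat_pos) (auto simp: t_def)
  then have "mat_pos (2*n) (\<lambda>i j. pi_ext (block_mat n t M (\<lambda>i j. adj (M i j)) i j))"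
    using mat_pos_pi_ext block_mat_Xt[OF M] by blast
  moreover have "(\<lambda>i j. pi_ext (block_mat n t M (\<lambda>i j. adj (M i j)) i j))
      = block_mat n t (\<lambda>i j. pi_ext (M i j)) (\<lambda>i j. pi_ext (adj (M i j)))"
    by (intro ext) (simp add: block_mat_def pi_ext_id pi_ext_zero pi_ext_cscale_id)
  ultimately show "vnorm2 n (mat_app n (\<lambda>i j. pi_ext (M i j)) \<xi>) \<le> (matnorm n M)\<^sup>2 * vnorm2 n \<xi>" for \<xi>
    using M bop_pi_ext pi_ext_is_adj unfolding t_def by (intro block_mat_pos_bound) auto
qed

lemma ccp_pi_ext: "ccp Xt pi_ext"
  unfolding ccp_def
  using bop_pi_ext pi_ext_add_op pi_ext_cscale_op pi_ext_adj matnorm_pi_ext_le mat_pos_pi_ext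
  by blast

lemma opsys_rep_pi_ext: "opsys_rep At Xt pi_ext"
  unfolding opsys_rep_def using ccp_pi_ext pi_ext_comp by blast

lemma opsys_rep_unique:
  assumes \<rho>: "opsys_rep At Xt \<rho>" and extends: "\<forall>x\<in>X. \<rho> x = \<pi> x" and x: "x \<in> Xt"
  shows "\<rho> x = pi_ext x"
proof -
  have ccp: "ccp Xt \<rho>" and mult: "\<And>a y. a \<in> At \<Longrightarrow> y \<in> Xt \<Longrightarrow> \<rho> (a \<circ> y) = \<rho> a \<circ> \<rho> y"
    using \<rho> unfolding opsys_rep_def by blast+
  show ?thesis
  proof (rule bop_eq_on_rep_range[OF ccpD(1)[OF ccp x] bop_pi_ext[OF x]])
    fix a \<eta> assume a: "a \<in> A"
    have aX: "a \<in> X" and aXt: "a \<in> Xt" using a A_subset_X X_subset_Xt by blast+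
    have adja: "adj a \<in> A" and adjx: "adj x \<in> Xt" using adj_A[OF a] adj_Xt[OF x] by blast+
    have "\<rho> (x \<circ> a) = \<rho> x \<circ> \<rho> a"
    proof (rule ccp_comp_right[OF ccp cstar_opsysD(6)[OF opsys_unital] x aXt])
      show "adj a \<circ> adj x \<in> Xt" using A_comp_Xt[OF adja adjx] X_subset_Xt by blast
      show "\<rho> (adj a \<circ> adj x) = \<rho> (adj a) \<circ> \<rho> (adj x)"
        using mult[OF _ adjx] adja A_subset_At by blast
    qed
    then show "\<rho> x (\<pi> a \<eta>) = pi_ext x (\<pi> a \<eta>)"
      using extends aX Xt_comp_A[OF x a] pi_ext_pi[OF x a] by simp
  qed
qed

end

theorem lemma3p9:
  fixes A X At Xt :: "('h::chilbert \<Rightarrow> 'h) set"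
  assumes "cstar_opsys A X"
    and "unitization A X At Xt"
  shows "At \<subseteq> mult_alg A \<and> Xt \<subseteq> mult_sys A X \<and>
    (\<forall>\<pi> :: ('h \<Rightarrow> 'h) \<Rightarrow> ('k::chilbert \<Rightarrow> 'k).
       opsys_rep A X \<pi> \<and> nondegenerate A \<pi> \<longrightarrow>
       (\<exists>\<pi>t. opsys_rep At Xt \<pi>t \<and> (\<forall>x\<in>X. \<pi>t x = \<pi> x) \<and>
          (\<forall>\<rho>. opsys_rep At Xt \<rho> \<and> (\<forall>x\<in>X. \<rho> x = \<pi> x) \<longrightarrow> (\<forall>x\<in>Xt. \<rho> x = \<pi>t x))))"
proof -
  interpret opsys_unitization A X At Xt
    using assms by unfold_locales
  have "\<exists>\<pi>t. opsys_rep At Xt \<pi>t \<and> (\<forall>x\<in>X. \<pi>t x = \<pi> x) \<and>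
          (\<forall>\<rho>. opsys_rep At Xt \<rho> \<and> (\<forall>x\<in>X. \<rho> x = \<pi> x) \<longrightarrow> (\<forall>x\<in>Xt. \<rho> x = \<pi>t x))"
    if "opsys_rep A X \<pi>" "nondegenerate A \<pi>" for \<pi> :: "('h \<Rightarrow> 'h) \<Rightarrow> ('k::chilbert \<Rightarrow> 'k)"
  proof -
    interpret unitization_rep A X At Xt \<pi>
      using that by unfold_locales
    show ?thesis
      using opsys_rep_pi_ext pi_ext_extends opsys_rep_unique by blast
  qed
  then show ?thesis
    using At_subset_mult_alg Xt_subset_mult_sys by blast
qed

end
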